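(* Let $\mathcal{C}$ be a path category and let $\mathcal{D}$ be a class of display maps with weak (respectively strong) homotopy $\Pi$-types in $\mathcal{C}$. Let $\overline{\mathcal{D}}$ be the closure of $\mathcal{D}$ under composition. Then for all composable $d: X \to I$ in $\mathcal{D}$ and $f: I \to J$ in $\overline{\mathcal{D}}$, the weak (respectively strong) homotopy $\Pi$-type $\Pi_f(d)$ exists.
   Context: A path category is a category with two classes of maps, fibrations and weak equivalences, such that: fibrations are closed under composition and contain the isomorphisms; pullbacks of fibrations along arbitrary maps exist and are fibrations; there is a terminal object and every map to it is a fibration; isomorphisms are weak equivalences; weak equivalences satisfy 2-out-of-6; every object $X$ has a path object, a factorisation of the diagonal as a weak equivalence $X \to PX$ followed by a fibration $(s,t): PX \to X\times X$; pullbacks of trivial fibrations are trivial fibrations; every trivial fibration has a section. For a fibration $p: Y \to A$ one similarly factors $Y \to Y\times_A Y$ to get a fibrewise path object $P_A Y$, and two maps $m, m': D \to Y$ over $A$ are fibrewise homotopic ($m \simeq_A m'$) if there is $H: D \to P_A Y$ with $(s,t)H = (m,m')$. Homotopy $\Pi$-types: given fibrations $g: C \to B$ and $f: B \to A$, a weak homotopy $\Pi$-type $\Pi_f(g)$ is a fibration $\pi: \Pi \to A$ with a map $\varepsilon: \Pi\times_A B \to C$ satisfying $g\varepsilon = $ the projection to $B$, such that for every map $h: D \to A$ and every $m: D\times_A B \to C$ with $gm$ equal to the projection to $B$, there is $k: D \to \Pi$ with $\pi k = h$ and $\varepsilon\circ(k\times_A B) \simeq_B m$; it is strong if moreover for any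 $k, k': D \to \Pi$ over $A$ with $\varepsilon(k\times_A B) \simeq_B \varepsilon(k'\times_A B)$ we have $k \simeq_A k'$. A class $\mathcal{D}$ of fibrations is a class of display maps with weak (strong) homotopy $\Pi$-types if: every identity map lies in $\mathcal{D}$; the pullback of a map in $\mathcal{D}$ along any map can be found in $\mathcal{D}$; and for all composable $d: X \to I$, $e: I \to J$ in $\mathcal{D}$ a weak (strong) homotopy $\Pi$-type $\Pi_e(d)$ exists and can be found in $\mathcal{D}$. *)

theory Defs
  imports Main
begin

record ('o,'m) cat =
  Ob :: "'o set"
  Ar :: "'m set"
  Dom :: "'m \<Rightarrow> 'o"
  Cod :: "'m \<Rightarrow> 'o"
  cmp :: "'m \<Rightarrow> 'm \<Rightarrow> 'm"   (* cmp C g f = g \<circ> f *)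
  ident :: "'o \<Rightarrow> 'm"

definition Hom :: "('o,'m) cat \<Rightarrow> 'o \<Rightarrow> 'o \<Rightarrow> 'm set" where
  "Hom C X Y = {f \<in> Ar C. Dom C f = X \<and> Cod C f = Y}"

definition category :: "('o,'m) cat \<Rightarrow> bool" where
  "category C \<longleftrightarrow>
     (\<forall>f \<in> Ar C. Dom C f \<in> Ob C \<and> Cod C f \<in> Ob C) \<and>
     (\<forall>X \<in> Ob C. ident C X \<in> Hom C X X) \<and>
     (\<forall>X Y Z f g. f \<in> Hom C X Y \<and> g \<in> Hom C Y Z \<longrightarrow> cmp C g f \<in> Hom C X Z) \<and>
     (\<forall>f \<in> Ar C. cmp C (ident C (Cod C f)) f = f \<and> cmp C f (ident C (Dom C f)) = f) \<and>
     (\<forall>f g h. f \<in> Ar C \<and> g \<in> Ar C \<and> h \<in> Ar C \<and> Cod C f = Dom C g \<and> Cod C g = Dom C h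
        \<longrightarrow> cmp C h (cmp C g f) = cmp C (cmp C h g) f)"

definition iso :: "('o,'m) cat \<Rightarrow> 'm \<Rightarrow> bool" where
  "iso C f \<longleftrightarrow> f \<in> Ar C \<and>
     (\<exists>g \<in> Hom C (Cod C f) (Dom C f).
        cmp C g f = ident C (Dom C f) \<and> cmp C f g = ident C (Cod C f))"

definition terminal :: "('o,'m) cat \<Rightarrow> 'o \<Rightarrow> bool" where
  "terminal C T \<longleftrightarrow> T \<in> Ob C \<and> (\<forall>X \<in> Ob C. \<exists>!t. t \<in> Hom C X T)"

text \<open>Then p1 is the
  pullback of g along f.\<close>
definition pullback :: "('o,'m) cat \<Rightarrow> 'm \<Rightarrow> 'm \<Rightarrow> 'o \<Rightarrow> 'm \<Rightarrow> 'm \<Rightarrow> bool" where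
  "pullback C f g P p1 p2 \<longleftrightarrow>
     f \<in> Ar C \<and> g \<in> Ar C \<and> Cod C f = Cod C g \<and>
     p1 \<in> Hom C P (Dom C f) \<and> p2 \<in> Hom C P (Dom C g) \<and>
     cmp C f p1 = cmp C g p2 \<and>
     (\<forall>Q a b. a \<in> Hom C Q (Dom C f) \<and> b \<in> Hom C Q (Dom C g) \<and> cmp C f a = cmp C g b
        \<longrightarrow> (\<exists>!u. u \<in> Hom C Q P \<and> cmp C p1 u = a \<and> cmp C p2 u = b))"

definition product :: "('o,'m) cat \<Rightarrow> 'o \<Rightarrow> 'o \<Rightarrow> 'o \<Rightarrow> 'm \<Rightarrow> 'm \<Rightarrow> bool" where
  "product C X Y P p1 p2 \<longleftrightarrow>
     X \<in> Ob C \<and> Y \<in> Ob C \<and> p1 \<in> Hom C P X \<and> p2 \<in> Hom C P Y \<and>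
     (\<forall>Q a b. a \<in> Hom C Q X \<and> b \<in> Hom C Q Y
        \<longrightarrow> (\<exists>!u. u \<in> Hom C Q P \<and> cmp C p1 u = a \<and> cmp C p2 u = b))"

definition path_category :: "('o,'m) cat \<Rightarrow> 'm set \<Rightarrow> 'm set \<Rightarrow> bool" where
  "path_category C fib weq \<longleftrightarrow>
     category C \<and> fib \<subseteq> Ar C \<and> weq \<subseteq> Ar C \<and>
     \<comment> \<open>fibrations closed under composition and contain the isomorphisms\<close>
     (\<forall>f g. f \<in> fib \<and> g \<in> fib \<and> Cod C f = Dom C g \<longrightarrow> cmp C g f \<in> fib) \<and>
     (\<forall>f. iso C f \<longrightarrow> f \<in> fib) \<and>
     \<comment> \<open>pullbacks of fibrations along arbitrary maps exist and are fibrations\<close>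
     (\<forall>f g. g \<in> fib \<and> f \<in> Ar C \<and> Cod C f = Cod C g \<longrightarrow> (\<exists>P p1 p2. pullback C f g P p1 p2)) \<and>
     (\<forall>f g P p1 p2. g \<in> fib \<and> pullback C f g P p1 p2 \<longrightarrow> p1 \<in> fib) \<and>
     \<comment> \<open>terminal object, every map to it is a fibration\<close>
     (\<exists>T. terminal C T \<and> (\<forall>X \<in> Ob C. \<forall>t \<in> Hom C X T. t \<in> fib)) \<and>
     \<comment> \<open>isomorphisms are weak equivalences\<close>
     (\<forall>f. iso C f \<longrightarrow> f \<in> weq) \<and>
     \<comment> \<open>2-out-of-6\<close>
     (\<forall>f g h. f \<in> Ar C \<and> g \<in> Ar C \<and> h \<in> Ar C \<and> Cod C f = Dom C g \<and> Cod C g = Dom C h \<and>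
        cmp C g f \<in> weq \<and> cmp C h g \<in> weq
        \<longrightarrow> f \<in> weq \<and> g \<in> weq \<and> h \<in> weq \<and> cmp C h (cmp C g f) \<in> weq) \<and>
     \<comment> \<open>path objects: X \<rightarrow> PX (weq) followed by (s,t) : PX \<rightarrow> X \<times> X (fib)\<close>
     (\<forall>X \<in> Ob C. \<exists>PX r XX q1 q2 st.
        r \<in> Hom C X PX \<and> r \<in> weq \<and> product C X X XX q1 q2 \<and>
        st \<in> Hom C PX XX \<and> st \<in> fib \<and>
        cmp C q1 (cmp C st r) = ident C X \<and> cmp C q2 (cmp C st r) = ident C X) \<and>
     \<comment> \<open>pullbacks of trivial fibrations are trivial fibrations\<close>
     (\<forall>f g P p1 p2. g \<in> fib \<and> g \<in> weq \<and> pullback C f g P p1 p2 \<longrightarrow> p1 \<in> fib \<and> p1 \<in> weq) \<and>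
     \<comment> \<open>every trivial fibration has a section\<close>
     (\<forall>p. p \<in> fib \<and> p \<in> weq \<longrightarrow>
        (\<exists>s \<in> Hom C (Cod C p) (Dom C p). cmp C p s = ident C (Cod C p)))"

text \<open>Fibrewise path object for a fibration p : Y \<rightarrow> A: Y \<rightarrow> P_A Y (weq) followed by
  (s,t) : P_A Y \<rightarrow> Y \<times>_A Y (fib), where (YY, q1, q2) is a pullback of p along p.\<close>
definition fpath_obj :: "('o,'m) cat \<Rightarrow> 'm set \<Rightarrow> 'm set \<Rightarrow> 'm \<Rightarrow> 'o \<Rightarrow> 'm \<Rightarrow> 'm \<Rightarrow> 'o \<Rightarrow> 'm \<Rightarrow> 'm \<Rightarrow> bool" where
  "fpath_obj C fib weq p PY r st YY q1 q2 \<longleftrightarrow>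
     p \<in> fib \<and> pullback C p p YY q1 q2 \<and>
     r \<in> Hom C (Dom C p) PY \<and> r \<in> weq \<and> st \<in> Hom C PY YY \<and> st \<in> fib \<and>
     cmp C q1 (cmp C st r) = ident C (Dom C p) \<and> cmp C q2 (cmp C st r) = ident C (Dom C p)"

definition fhtpy :: "('o,'m) cat \<Rightarrow> 'm set \<Rightarrow> 'm set \<Rightarrow> 'm \<Rightarrow> 'm \<Rightarrow> 'm \<Rightarrow> bool" where
  "fhtpy C fib weq p m m' \<longleftrightarrow>
     m \<in> Hom C (Dom C m) (Dom C p) \<and> m' \<in> Hom C (Dom C m) (Dom C p) \<and>
     cmp C p m = cmp C p m' \<and>
     (\<exists>PY r st YY q1 q2 H. fpath_obj C fib weq p PY r st YY q1 q2 \<and>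
        H \<in> Hom C (Dom C m) PY \<and>
        cmp C q1 (cmp C st H) = m \<and> cmp C q2 (cmp C st H) = m')"

text \<open>For h : D \<rightarrow> A and a pullback (R,d1,d2) = D \<times>_A B, the map k \<times>_A B is the
  (unique) u : R \<rightarrow> Q with q1 u = k d1, q2 u = d2.\<close>
definition is_pi :: "('o,'m) cat \<Rightarrow> 'm set \<Rightarrow> 'm set \<Rightarrow> bool \<Rightarrow> 'm \<Rightarrow> 'm \<Rightarrow>
                     'o \<Rightarrow> 'm \<Rightarrow> 'o \<Rightarrow> 'm \<Rightarrow> 'm \<Rightarrow> 'm \<Rightarrow> bool" where
  "is_pi C fib weq strong g f Pi \<pi> Q q1 q2 \<epsilon> \<longleftrightarrow>
     g \<in> fib \<and> f \<in> fib \<and> Cod C g = Dom C f \<and>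
     \<pi> \<in> fib \<and> \<pi> \<in> Hom C Pi (Cod C f) \<and>
     pullback C \<pi> f Q q1 q2 \<and>
     \<epsilon> \<in> Hom C Q (Dom C g) \<and> cmp C g \<epsilon> = q2 \<and>
     \<comment> \<open>weak universal property\<close>
     (\<forall>D h R d1 d2 m.
        h \<in> Hom C D (Cod C f) \<and> pullback C h f R d1 d2 \<and>
        m \<in> Hom C R (Dom C g) \<and> cmp C g m = d2 \<longrightarrow>
        (\<exists>k \<in> Hom C D Pi. cmp C \<pi> k = h \<and>
           (\<forall>u. u \<in> Hom C R Q \<and> cmp C q1 u = cmp C k d1 \<and> cmp C q2 u = d2 \<longrightarrow>
                fhtpy C fib weq g (cmp C \<epsilon> u) m))) \<and>
     \<comment> \<open>strong: uniqueness up to fibrewise homotopy\<close>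
     (strong \<longrightarrow>
       (\<forall>D h R d1 d2 k k' u u'.
          h \<in> Hom C D (Cod C f) \<and> pullback C h f R d1 d2 \<and>
          k \<in> Hom C D Pi \<and> k' \<in> Hom C D Pi \<and> cmp C \<pi> k = h \<and> cmp C \<pi> k' = h \<and>
          u \<in> Hom C R Q \<and> cmp C q1 u = cmp C k d1 \<and> cmp C q2 u = d2 \<and>
          u' \<in> Hom C R Q \<and> cmp C q1 u' = cmp C k' d1 \<and> cmp C q2 u' = d2 \<and>
          fhtpy C fib weq g (cmp C \<epsilon> u) (cmp C \<epsilon> u')
          \<longrightarrow> fhtpy C fib weq \<pi> k k'))"

definition has_pi :: "('o,'m) cat \<Rightarrow> 'm set \<Rightarrow> 'm set \<Rightarrow> bool \<Rightarrow> 'm \<Rightarrow> 'm \<Rightarrow> bool" where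
  "has_pi C fib weq strong g f \<longleftrightarrow>
     (\<exists>Pi \<pi> Q q1 q2 \<epsilon>. is_pi C fib weq strong g f Pi \<pi> Q q1 q2 \<epsilon>)"

definition display_class :: "('o,'m) cat \<Rightarrow> 'm set \<Rightarrow> 'm set \<Rightarrow> bool \<Rightarrow> 'm set \<Rightarrow> bool" where
  "display_class C fib weq strong \<D> \<longleftrightarrow>
     \<D> \<subseteq> fib \<and>
     (\<forall>X \<in> Ob C. ident C X \<in> \<D>) \<and>
     (\<forall>d \<in> \<D>. \<forall>h \<in> Ar C. Cod C h = Cod C d \<longrightarrow>
        (\<exists>P p1 p2. pullback C h d P p1 p2 \<and> p1 \<in> \<D>)) \<and>
     (\<forall>d e. d \<in> \<D> \<and> e \<in> \<D> \<and> Cod C d = Dom C e \<longrightarrow>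
        (\<exists>Pi \<pi> Q q1 q2 \<epsilon>. is_pi C fib weq strong d e Pi \<pi> Q q1 q2 \<epsilon> \<and> \<pi> \<in> \<D>))"

inductive_set comp_closure :: "('o,'m) cat \<Rightarrow> 'm set \<Rightarrow> 'm set" for C :: "('o,'m) cat" and \<D> :: "'m set" where
  base: "d \<in> \<D> \<Longrightarrow> d \<in> comp_closure C \<D>"
| comp: "f \<in> comp_closure C \<D> \<Longrightarrow> g \<in> comp_closure C \<D> \<Longrightarrow> Cod C f = Dom C g \<Longrightarrow>
         cmp C g f \<in> comp_closure C \<D>"

end

theory Submission
  imports Defs
begin

text \<open>Induction along the composition closure.  For \<open>f = g \<cdot> f\<^sub>1\<close> with \<open>\<Pi>\<^sub>1 = \<Pi>\<^bsub>f\<^sub>1\<^esub>(d)\<close> and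
  \<open>\<Pi>\<^sub>2 = \<Pi>\<^sub>g(\<Pi>\<^sub>1)\<close> in \<open>\<D>\<close>, \<open>\<Pi>\<^sub>2\<close> is also a \<open>\<Pi>\<^sub>f(d)\<close>, with evaluation \<open>\<epsilon>\<^sub>1 \<cdot> (\<epsilon>\<^sub>2 \<times>\<^bsub>J\<^sub>1\<^esub> I)\<close>.
  Given \<open>m\<close> over \<open>I\<close>, the weak property of \<open>\<Pi>\<^sub>1\<close> yields \<open>k\<^sub>1\<close> with \<open>\<epsilon>\<^sub>1(k\<^sub>1 \<times> I) \<simeq> m\<close>, and that of
  \<open>\<Pi>\<^sub>2\<close> yields \<open>k\<close> with \<open>\<epsilon>\<^sub>2(k \<times> J\<^sub>1) \<simeq> k\<^sub>1\<close> over \<open>J\<^sub>1\<close>.  Transporting the latter homotopy along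
  paths of \<open>\<Pi>\<^sub>1\<close> turns it into a homotopy over \<open>I\<close> after evaluation by \<open>\<epsilon>\<^sub>1\<close>, and composing with
  the former gives the required homotopy for \<open>k\<close>.  Both transport and composition of
  fibrewise homotopies reduce to one fact: maps over the base that agree after precomposition
  with a weak equivalence are fibrewise homotopic, which follows from lifting weak equivalences
  against fibrations, itself a consequence of the factorisation lemma.  In the strong case the
  two uniqueness properties are simply applied one after the other.\<close>

section \<open>Path categories\<close>

locale path_cat =
  fixes C :: "('o,'m) cat" and fib weq :: "'m set"
  assumes path_category: "path_category C fib weq"
begin

abbreviation comp (infixr "\<cdot>" 55) where "g \<cdot> f \<equiv> cmp C g f"

lemma category: "category C"
  using path_category unfolding path_category_def by (elim conjE) metis

lemma fib_subset: "fib \<subseteq> Ar C"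
  using path_category unfolding path_category_def by (elim conjE) metis

lemma fib_comp: "f \<in> fib \<Longrightarrow> g \<in> fib \<Longrightarrow> Cod C f = Dom C g \<Longrightarrow> g \<cdot> f \<in> fib"
  using path_category unfolding path_category_def by (elim conjE) metis

lemma pullback_exists:
  "g \<in> fib \<Longrightarrow> f \<in> Ar C \<Longrightarrow> Cod C f = Cod C g \<Longrightarrow> \<exists>P p1 p2. pullback C f g P p1 p2"
  using path_category unfolding path_category_def by (elim conjE) metis

lemma pullback_fib: "g \<in> fib \<Longrightarrow> pullback C f g P p1 p2 \<Longrightarrow> p1 \<in> fib"
  using path_category unfolding path_category_def by (elim conjE) metis

lemma terminal_fib:
  "\<exists>T. terminal C T \<and> (\<forall>X \<in> Ob C. \<forall>t \<in> Hom C X T. t \<in> fib)"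
  using path_category unfolding path_category_def by (elim conjE) metis

lemma iso_weq: "iso C f \<Longrightarrow> f \<in> weq"
  using path_category unfolding path_category_def by (elim conjE) metis

lemma two_out_of_six:
  "f \<in> Ar C \<Longrightarrow> g \<in> Ar C \<Longrightarrow> h \<in> Ar C \<Longrightarrow> Cod C f = Dom C g \<Longrightarrow> Cod C g = Dom C h \<Longrightarrow>
   g \<cdot> f \<in> weq \<Longrightarrow> h \<cdot> g \<in> weq \<Longrightarrow> f \<in> weq \<and> h \<in> weq"
  using path_category unfolding path_category_def by (elim conjE) metis

lemma path_object_exists:
  "X \<in> Ob C \<Longrightarrow> \<exists>PX r XX q1 q2 st. r \<in> Hom C X PX \<and> r \<in> weq \<and> product C X X XX q1 q2 \<and>
     st \<in> Hom C PX XX \<and> st \<in> fib \<and> q1 \<cdot> (st \<cdot> r) = ident C X \<and> q2 \<cdot> (st \<cdot> r) = ident C X"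
  using path_category unfolding path_category_def by (elim conjE) metis

lemma pullback_trivial_fib:
  "g \<in> fib \<Longrightarrow> g \<in> weq \<Longrightarrow> pullback C f g P p1 p2 \<Longrightarrow> p1 \<in> weq"
  using path_category unfolding path_category_def by (elim conjE) metis

lemma trivial_fib_section:
  "p \<in> fib \<Longrightarrow> p \<in> weq \<Longrightarrow> \<exists>s \<in> Hom C (Cod C p) (Dom C p). p \<cdot> s = ident C (Cod C p)"
  using path_category unfolding path_category_def by (elim conjE) metis

lemma fib_Ar: "f \<in> fib \<Longrightarrow> f \<in> Ar C"
  using fib_subset by blast

lemma HomI: "f \<in> Ar C \<Longrightarrow> f \<in> Hom C (Dom C f) (Cod C f)"
  by (simp add: Hom_def)

lemma HomD: "f \<in> Hom C X Y \<Longrightarrow> f \<in> Ar C \<and> Dom C f = X \<and> Cod C f = Y"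
  by (simp add: Hom_def)

lemma Hom_comp: "f \<in> Hom C X Y \<Longrightarrow> g \<in> Hom C Y Z \<Longrightarrow> g \<cdot> f \<in> Hom C X Z"
  using category unfolding category_def by blast

lemma ident_Hom: "X \<in> Ob C \<Longrightarrow> ident C X \<in> Hom C X X"
  using category unfolding category_def by blast

lemma Hom_Ob: "f \<in> Hom C X Y \<Longrightarrow> X \<in> Ob C \<and> Y \<in> Ob C"
  using category unfolding category_def Hom_def by blast

lemma comp_assoc: "f \<in> Hom C X Y \<Longrightarrow> g \<in> Hom C Y Z \<Longrightarrow> h \<in> Hom C Z W \<Longrightarrow> (h \<cdot> g) \<cdot> f = h \<cdot> (g \<cdot> f)"
  using category unfolding category_def Hom_def by simp

lemma comp_ident_left: "f \<in> Hom C X Y \<Longrightarrow> ident C Y \<cdot> f = f"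
  using category unfolding category_def Hom_def by auto

lemma comp_ident_right: "f \<in> Hom C X Y \<Longrightarrow> f \<cdot> ident C X = f"
  using category unfolding category_def Hom_def by auto

text \<open>Rewrite rules phrased with \<open>Ar\<close>, \<open>Dom\<close> and \<open>Cod\<close> rather than \<open>Hom\<close>, so that the
  simplifier can discharge the typing side conditions of associativity.\<close>

lemma comp_Ar: "f \<in> Ar C \<Longrightarrow> g \<in> Ar C \<Longrightarrow> Cod C f = Dom C g \<Longrightarrow> g \<cdot> f \<in> Ar C"
  and Dom_comp: "f \<in> Ar C \<Longrightarrow> g \<in> Ar C \<Longrightarrow> Cod C f = Dom C g \<Longrightarrow> Dom C (g \<cdot> f) = Dom C f"
  and Cod_comp: "f \<in> Ar C \<Longrightarrow> g \<in> Ar C \<Longrightarrow> Cod C f = Dom C g \<Longrightarrow> Cod C (g \<cdot> f) = Cod C g"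
  using Hom_comp HomI HomD by metis+

lemma comp_assoc_Ar: "f \<in> Ar C \<Longrightarrow> g \<in> Ar C \<Longrightarrow> h \<in> Ar C \<Longrightarrow> Cod C f = Dom C g \<Longrightarrow> Cod C g = Dom C h
   \<Longrightarrow> (h \<cdot> g) \<cdot> f = h \<cdot> (g \<cdot> f)"
  using comp_assoc HomI by metis

lemma ident_Ar: "X \<in> Ob C \<Longrightarrow> ident C X \<in> Ar C"
  and Dom_ident: "X \<in> Ob C \<Longrightarrow> Dom C (ident C X) = X"
  and Cod_ident: "X \<in> Ob C \<Longrightarrow> Cod C (ident C X) = X"
  using ident_Hom HomD by blast+

lemma comp_ident_left_Ar: "f \<in> Ar C \<Longrightarrow> Cod C f = Y \<Longrightarrow> ident C Y \<cdot> f = f"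
  and comp_ident_right_Ar: "f \<in> Ar C \<Longrightarrow> Dom C f = X \<Longrightarrow> f \<cdot> ident C X = f"
  using comp_ident_left comp_ident_right HomI by blast+

lemmas arrow_simps = Hom_def comp_Ar Dom_comp Cod_comp comp_assoc_Ar ident_Ar Dom_ident Cod_ident
  comp_ident_left_Ar comp_ident_right_Ar

lemma comp_reassoc:
  "a \<cdot> b = e \<Longrightarrow> a \<in> Ar C \<Longrightarrow> b \<in> Ar C \<Longrightarrow> x \<in> Ar C \<Longrightarrow> Cod C b = Dom C a \<Longrightarrow> Cod C x = Dom C b
   \<Longrightarrow> a \<cdot> (b \<cdot> x) = e \<cdot> x"
  by (metis comp_assoc_Ar)

lemma comp_reassoc3:
  "a \<cdot> (b \<cdot> c) = e \<Longrightarrow> a \<in> Ar C \<Longrightarrow> b \<in> Ar C \<Longrightarrow> c \<in> Ar C \<Longrightarrow> x \<in> Ar C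
   \<Longrightarrow> Cod C b = Dom C a \<Longrightarrow> Cod C c = Dom C b \<Longrightarrow> Cod C x = Dom C c
   \<Longrightarrow> a \<cdot> (b \<cdot> (c \<cdot> x)) = e \<cdot> x"
  by (metis comp_assoc_Ar comp_Ar Dom_comp Cod_comp)

lemma ident_weq:
  assumes "X \<in> Ob C" shows "ident C X \<in> weq"
proof (rule iso_weq)
  have X: "ident C X \<in> Hom C X X" using assms by (rule ident_Hom)
  with comp_ident_left[OF X] HomD[OF X] show "iso C (ident C X)" unfolding iso_def by auto
qed

lemma weq_cancel_left: "f \<in> Hom C X Y \<Longrightarrow> g \<in> Hom C Y Z \<Longrightarrow> g \<cdot> f \<in> weq \<Longrightarrow> g \<in> weq \<Longrightarrow> f \<in> weq"
  using two_out_of_six[of f g "ident C Z"] comp_ident_left[of g] ident_Hom[of Z] Hom_Ob HomD by metis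

lemma weq_cancel_right: "f \<in> Hom C X Y \<Longrightarrow> g \<in> Hom C Y Z \<Longrightarrow> g \<cdot> f \<in> weq \<Longrightarrow> f \<in> weq \<Longrightarrow> g \<in> weq"
  using two_out_of_six[of "ident C X" f g] comp_ident_right[of f] ident_Hom[of X] Hom_Ob HomD by metis

section \<open>Pullbacks and products\<close>

lemma pullbackD:
  "pullback C f g P p1 p2 \<Longrightarrow> f \<in> Hom C (Dom C f) (Cod C f) \<and> g \<in> Hom C (Dom C g) (Cod C f) \<and>
     p1 \<in> Hom C P (Dom C f) \<and> p2 \<in> Hom C P (Dom C g) \<and> f \<cdot> p1 = g \<cdot> p2"
  unfolding pullback_def Hom_def by auto

lemma pullback_lift:
  "pullback C f g P p1 p2 \<Longrightarrow> a \<in> Hom C Q (Dom C f) \<Longrightarrow> b \<in> Hom C Q (Dom C g) \<Longrightarrow> f \<cdot> a = g \<cdot> b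
   \<Longrightarrow> \<exists>u. u \<in> Hom C Q P \<and> p1 \<cdot> u = a \<and> p2 \<cdot> u = b"
  unfolding pullback_def by blast

lemma pullback_lift_unique:
  assumes pb: "pullback C f g P p1 p2" and u: "u \<in> Hom C Q P" and u': "u' \<in> Hom C Q P"
    and "p1 \<cdot> u = p1 \<cdot> u'" and "p2 \<cdot> u = p2 \<cdot> u'"
  shows "u = u'"
proof -
  have p: "p1 \<in> Hom C P (Dom C f)" "p2 \<in> Hom C P (Dom C g)"
    using pullbackD[OF pb] by auto
  have "f \<cdot> (p1 \<cdot> u) = g \<cdot> (p2 \<cdot> u)"
    using u pullbackD[OF pb] comp_assoc[OF u p(1)] comp_assoc[OF u p(2)] by metis
  then have "\<exists>!v. v \<in> Hom C Q P \<and> p1 \<cdot> v = p1 \<cdot> u \<and> p2 \<cdot> v = p2 \<cdot> u"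
    using pb p u Hom_comp unfolding pullback_def by blast
  then show ?thesis using assms by metis
qed

lemma productD: "product C X Y P p1 p2 \<Longrightarrow> X \<in> Ob C \<and> Y \<in> Ob C \<and> p1 \<in> Hom C P X \<and> p2 \<in> Hom C P Y"
  unfolding product_def by blast

lemma product_lift:
  "product C X Y P p1 p2 \<Longrightarrow> a \<in> Hom C Q X \<Longrightarrow> b \<in> Hom C Q Y \<Longrightarrow> \<exists>u. u \<in> Hom C Q P \<and> p1 \<cdot> u = a \<and> p2 \<cdot> u = b"
  unfolding product_def by blast

lemma product_lift_unique:
  assumes pr: "product C X Y P p1 p2" and u: "u \<in> Hom C Q P" and u': "u' \<in> Hom C Q P"
    and "p1 \<cdot> u = p1 \<cdot> u'" and "p2 \<cdot> u = p2 \<cdot> u'"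
  shows "u = u'"
proof -
  have "\<exists>!v. v \<in> Hom C Q P \<and> p1 \<cdot> v = p1 \<cdot> u \<and> p2 \<cdot> v = p2 \<cdot> u"
    using pr productD[OF pr] u Hom_comp unfolding product_def by blast
  then show ?thesis using assms by metis
qed

lemma product_sym: "product C X Y P p1 p2 \<Longrightarrow> product C Y X P p2 p1"
  unfolding product_def
proof (elim conjE, intro conjI allI impI)
  fix Q a b
  assume "\<forall>Q a b. a \<in> Hom C Q X \<and> b \<in> Hom C Q Y \<longrightarrow> (\<exists>!u. u \<in> Hom C Q P \<and> p1 \<cdot> u = a \<and> p2 \<cdot> u = b)"
    and "a \<in> Hom C Q Y \<and> b \<in> Hom C Q X"
  then have "\<exists>!u. u \<in> Hom C Q P \<and> p1 \<cdot> u = b \<and> p2 \<cdot> u = a" by simp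
  then show "\<exists>!u. u \<in> Hom C Q P \<and> p2 \<cdot> u = a \<and> p1 \<cdot> u = b" by (simp add: conj_commute)
qed

lemma product_is_pullback_to_terminal:
  assumes pr: "product C X Y P p1 p2" and T: "terminal C T"
    and tX: "tX \<in> Hom C X T" and tY: "tY \<in> Hom C Y T"
  shows "pullback C tX tY P p1 p2"
proof -
  have p: "p1 \<in> Hom C P X" "p2 \<in> Hom C P Y" using productD[OF pr] by auto
  have "tX \<cdot> p1 = tY \<cdot> p2"
    using T p tX tY Hom_comp Hom_Ob unfolding terminal_def by metis
  moreover have "Dom C tX = X" "Dom C tY = Y" "Cod C tX = T" "Cod C tY = T" "tX \<in> Ar C" "tY \<in> Ar C"
    using tX tY HomD by auto
  ultimately show ?thesis
    using pr p unfolding pullback_def product_def by simp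
qed

lemma product_exists:
  assumes X: "X \<in> Ob C" and Y: "Y \<in> Ob C"
  shows "\<exists>P p1 p2. product C X Y P p1 p2"
proof -
  obtain T where T: "terminal C T" and T_fib: "\<forall>X \<in> Ob C. \<forall>t \<in> Hom C X T. t \<in> fib"
    using terminal_fib by blast
  obtain tX tY where tX: "tX \<in> Hom C X T" and tY: "tY \<in> Hom C Y T"
    using T X Y unfolding terminal_def by blast
  have t: "Dom C tX = X" "Dom C tY = Y" "Cod C tX = T" "Cod C tY = T" "tX \<in> Ar C"
    using tX tY HomD by auto
  obtain P p1 p2 where pb: "pullback C tX tY P p1 p2"
    using pullback_exists[of tY tX] T_fib tY Y t by auto
  have "product C X Y P p1 p2" unfolding product_def
  proof (intro conjI X Y allI impI)
    show "p1 \<in> Hom C P X" "p2 \<in> Hom C P Y" using pullbackD[OF pb] t by auto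
    fix Q a b assume ab: "a \<in> Hom C Q X \<and> b \<in> Hom C Q Y"
    then have "tX \<cdot> a = tY \<cdot> b"
      using T tX tY Hom_comp Hom_Ob unfolding terminal_def by metis
    then show "\<exists>!u. u \<in> Hom C Q P \<and> p1 \<cdot> u = a \<and> p2 \<cdot> u = b"
      using pb ab t unfolding pullback_def by simp
  qed
  then show ?thesis by blast
qed

lemma product_proj_fib:
  assumes pr: "product C X Y P p1 p2" shows "p1 \<in> fib" "p2 \<in> fib"
proof -
  obtain T where T: "terminal C T" and T_fib: "\<forall>X \<in> Ob C. \<forall>t \<in> Hom C X T. t \<in> fib"
    using terminal_fib by blast
  have X: "X \<in> Ob C" and Y: "Y \<in> Ob C" using productD[OF pr] by auto
  obtain tX tY where tX: "tX \<in> Hom C X T" and tY: "tY \<in> Hom C Y T"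
    using T X Y unfolding terminal_def by blast
  have "tX \<in> fib" "tY \<in> fib" using T_fib tX tY X Y by auto
  then show "p1 \<in> fib" "p2 \<in> fib"
    using pullback_fib product_is_pullback_to_terminal[OF pr T tX tY]
      product_is_pullback_to_terminal[OF product_sym[OF pr] T tY tX] by blast+
qed

lemma pullback_paste:
  assumes right: "pullback C \<pi> g Q2 a2 b2" and left: "pullback C b2 f Q c1 c2"
  shows "pullback C \<pi> (g \<cdot> f) Q (a2 \<cdot> c1) c2"
proof -
  have r: "\<pi> \<in> Hom C (Dom C \<pi>) (Cod C \<pi>)" "g \<in> Hom C (Dom C g) (Cod C \<pi>)" "a2 \<in> Hom C Q2 (Dom C \<pi>)"
    "b2 \<in> Hom C Q2 (Dom C g)" "\<pi> \<cdot> a2 = g \<cdot> b2" using pullbackD[OF right] by auto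
  have l: "f \<in> Hom C (Dom C f) (Cod C b2)" "c1 \<in> Hom C Q (Dom C b2)" "c2 \<in> Hom C Q (Dom C f)"
    "b2 \<cdot> c1 = f \<cdot> c2" using pullbackD[OF left] by auto
  have f: "f \<in> Hom C (Dom C f) (Dom C g)" and c1: "c1 \<in> Hom C Q Q2" using l(1,2) HomD[OF r(4)] by auto
  have gf: "g \<cdot> f \<in> Hom C (Dom C f) (Cod C \<pi>)" using Hom_comp[OF f r(2)] .
  show ?thesis unfolding pullback_def
  proof (intro conjI allI impI)
    show "\<pi> \<in> Ar C" "g \<cdot> f \<in> Ar C" "Cod C \<pi> = Cod C (g \<cdot> f)" "a2 \<cdot> c1 \<in> Hom C Q (Dom C \<pi>)"
      "c2 \<in> Hom C Q (Dom C (g \<cdot> f))"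
      using r gf l Hom_comp[OF c1 r(3)] by (auto simp: Hom_def)
    show "\<pi> \<cdot> (a2 \<cdot> c1) = (g \<cdot> f) \<cdot> c2" using r(1-4) f c1 l(3)
      by (simp add: arrow_simps comp_reassoc[OF r(5)] l(4))
    fix Q' \<alpha> \<beta> assume "\<alpha> \<in> Hom C Q' (Dom C \<pi>) \<and> \<beta> \<in> Hom C Q' (Dom C (g \<cdot> f)) \<and> \<pi> \<cdot> \<alpha> = (g \<cdot> f) \<cdot> \<beta>"
    then have \<alpha>: "\<alpha> \<in> Hom C Q' (Dom C \<pi>)" and \<beta>: "\<beta> \<in> Hom C Q' (Dom C f)"
      and eq: "\<pi> \<cdot> \<alpha> = g \<cdot> (f \<cdot> \<beta>)"
      using HomD[OF gf] comp_assoc[OF _ f r(2)] by auto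
    obtain \<gamma> where \<gamma>: "\<gamma> \<in> Hom C Q' Q2" "a2 \<cdot> \<gamma> = \<alpha>" "b2 \<cdot> \<gamma> = f \<cdot> \<beta>"
      using pullback_lift[OF right \<alpha> _ eq] Hom_comp[OF \<beta> f] by blast
    obtain \<delta> where \<delta>: "\<delta> \<in> Hom C Q' Q" "c1 \<cdot> \<delta> = \<gamma>" "c2 \<cdot> \<delta> = \<beta>"
      using pullback_lift[OF left, of \<gamma> Q' \<beta>] \<gamma> \<beta> HomD[OF r(4)] by auto
    show "\<exists>!u. u \<in> Hom C Q' Q \<and> (a2 \<cdot> c1) \<cdot> u = \<alpha> \<and> c2 \<cdot> u = \<beta>"
    proof (rule ex1I[of _ \<delta>])
      show "\<delta> \<in> Hom C Q' Q \<and> (a2 \<cdot> c1) \<cdot> \<delta> = \<alpha> \<and> c2 \<cdot> \<delta> = \<beta>"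
        using \<delta> \<gamma> r(3) c1 by (simp add: arrow_simps)
      fix u assume "u \<in> Hom C Q' Q \<and> (a2 \<cdot> c1) \<cdot> u = \<alpha> \<and> c2 \<cdot> u = \<beta>"
      then have u: "u \<in> Hom C Q' Q" "(a2 \<cdot> c1) \<cdot> u = \<alpha>" "c2 \<cdot> u = \<beta>" by auto
      have "c1 \<cdot> u = \<gamma>"
      proof (rule pullback_lift_unique[OF right])
        show "c1 \<cdot> u \<in> Hom C Q' Q2" using u c1 Hom_comp by blast
        show "a2 \<cdot> (c1 \<cdot> u) = a2 \<cdot> \<gamma>" using comp_assoc[OF u(1) c1 r(3)] u(2) \<gamma>(2) by simp
        show "b2 \<cdot> (c1 \<cdot> u) = b2 \<cdot> \<gamma>" using u(1) c1 r(4) l(3) f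
          by (simp add: arrow_simps comp_reassoc[OF l(4)] u(3) \<gamma>)
      qed (use \<gamma> in blast)
      then show "u = \<delta>" using pullback_lift_unique[OF left, of u Q' \<delta>] \<delta> u by auto
    qed
  qed
qed

lemma pullback_cancel:
  assumes right: "pullback C h g R' r1 r2" and outer: "pullback C h (g \<cdot> f) R e1 e2"
    and f: "f \<in> Hom C I J1" and g: "g \<in> Hom C J1 J"
    and e: "e \<in> Hom C R R'" "r1 \<cdot> e = e1" "r2 \<cdot> e = f \<cdot> e2"
  shows "pullback C r2 f R e e2"
proof -
  have gf: "g \<cdot> f \<in> Hom C I J" using Hom_comp[OF f g] .
  have r: "h \<in> Hom C (Dom C h) J" "r1 \<in> Hom C R' (Dom C h)" "r2 \<in> Hom C R' J1" "h \<cdot> r1 = g \<cdot> r2"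
    using pullbackD[OF right] g by (auto simp: Hom_def)
  have o: "e1 \<in> Hom C R (Dom C h)" "e2 \<in> Hom C R I"
    using pullbackD[OF outer] gf by (auto simp: Hom_def)
  show ?thesis unfolding pullback_def
  proof (intro conjI allI impI)
    show "r2 \<in> Ar C" "f \<in> Ar C" "Cod C r2 = Cod C f" "e \<in> Hom C R (Dom C r2)" "e2 \<in> Hom C R (Dom C f)"
      using e o r f by (auto simp: Hom_def)
    show "r2 \<cdot> e = f \<cdot> e2" by fact
    fix Q \<alpha> \<beta> assume "\<alpha> \<in> Hom C Q (Dom C r2) \<and> \<beta> \<in> Hom C Q (Dom C f) \<and> r2 \<cdot> \<alpha> = f \<cdot> \<beta>"
    then have \<alpha>: "\<alpha> \<in> Hom C Q R'" and \<beta>: "\<beta> \<in> Hom C Q I" and eq: "r2 \<cdot> \<alpha> = f \<cdot> \<beta>"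
      using r f by (auto simp: Hom_def)
    have "h \<cdot> (r1 \<cdot> \<alpha>) = (g \<cdot> f) \<cdot> \<beta>" using r(1-3) \<alpha> \<beta> f g
      by (simp add: arrow_simps comp_reassoc[OF r(4)] eq)
    then obtain \<delta> where \<delta>: "\<delta> \<in> Hom C Q R" "e1 \<cdot> \<delta> = r1 \<cdot> \<alpha>" "e2 \<cdot> \<delta> = \<beta>"
      using pullback_lift[OF outer, of "r1 \<cdot> \<alpha>" Q \<beta>] \<alpha> \<beta> r gf Hom_comp HomD by metis
    have e\<delta>: "e \<cdot> \<delta> = \<alpha>"
    proof (rule pullback_lift_unique[OF right])
      show "e \<cdot> \<delta> \<in> Hom C Q R'" using e \<delta> Hom_comp by blast
      show "r1 \<cdot> (e \<cdot> \<delta>) = r1 \<cdot> \<alpha>" using e(1) \<delta>(1) r(2) o(1)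
        by (simp add: arrow_simps comp_reassoc[OF e(2)] \<delta>(2))
      show "r2 \<cdot> (e \<cdot> \<delta>) = r2 \<cdot> \<alpha>" using e(1) \<delta>(1) r(3) f o(2)
        by (simp add: arrow_simps comp_reassoc[OF e(3)] \<delta>(3) eq)
    qed (use \<alpha> in blast)
    show "\<exists>!u. u \<in> Hom C Q R \<and> e \<cdot> u = \<alpha> \<and> e2 \<cdot> u = \<beta>"
    proof (rule ex1I[of _ \<delta>])
      show "\<delta> \<in> Hom C Q R \<and> e \<cdot> \<delta> = \<alpha> \<and> e2 \<cdot> \<delta> = \<beta>" using \<delta> e\<delta> by simp
      fix u assume u: "u \<in> Hom C Q R \<and> e \<cdot> u = \<alpha> \<and> e2 \<cdot> u = \<beta>"
      then have "e1 \<cdot> u = r1 \<cdot> \<alpha>" using e(1) r(2) by (auto simp: arrow_simps simp flip: e(2))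
      then show "u = \<delta>" using pullback_lift_unique[OF outer, of u Q \<delta>] \<delta> u by auto
    qed
  qed
qed

lemma product_map_pullback:
  assumes AE: "product C A E AE y1 y2" and BE: "product C B E BE x1 x2" and a: "a \<in> Hom C A B"
    and m: "m \<in> Hom C AE BE" "x1 \<cdot> m = a \<cdot> y1" "x2 \<cdot> m = y2"
  shows "pullback C a x1 AE y1 m"
proof -
  have y: "y1 \<in> Hom C AE A" "y2 \<in> Hom C AE E" and x: "x1 \<in> Hom C BE B" "x2 \<in> Hom C BE E"
    using productD[OF AE] productD[OF BE] by auto
  show ?thesis unfolding pullback_def
  proof (intro conjI allI impI)
    show "a \<in> Ar C" "x1 \<in> Ar C" "Cod C a = Cod C x1" "y1 \<in> Hom C AE (Dom C a)" "m \<in> Hom C AE (Dom C x1)"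
      using a x y m HomD by auto
    show "a \<cdot> y1 = x1 \<cdot> m" using m by simp
    fix Q \<alpha> \<beta> assume "\<alpha> \<in> Hom C Q (Dom C a) \<and> \<beta> \<in> Hom C Q (Dom C x1) \<and> a \<cdot> \<alpha> = x1 \<cdot> \<beta>"
    then have \<alpha>: "\<alpha> \<in> Hom C Q A" and \<beta>: "\<beta> \<in> Hom C Q BE" and eq: "a \<cdot> \<alpha> = x1 \<cdot> \<beta>"
      using a x HomD by auto
    obtain u where u: "u \<in> Hom C Q AE" "y1 \<cdot> u = \<alpha>" "y2 \<cdot> u = x2 \<cdot> \<beta>"
      using product_lift[OF AE \<alpha> Hom_comp[OF \<beta> x(2)]] by blast
    have mu: "m \<cdot> v = \<beta>" if v: "v \<in> Hom C Q AE" "y1 \<cdot> v = \<alpha>" "y2 \<cdot> v = x2 \<cdot> \<beta>" for v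
    proof (rule product_lift_unique[OF BE _ \<beta>])
      show "m \<cdot> v \<in> Hom C Q BE" using Hom_comp[OF v(1) m(1)] .
      show "x1 \<cdot> (m \<cdot> v) = x1 \<cdot> \<beta>" using v(1) m(1) y(1) x(1) a
        by (simp add: arrow_simps comp_reassoc[OF m(2)] v(2) eq)
      show "x2 \<cdot> (m \<cdot> v) = x2 \<cdot> \<beta>" using v(1) m(1) x(2)
        by (simp add: arrow_simps comp_reassoc[OF m(3)] v(3))
    qed
    show "\<exists>!u. u \<in> Hom C Q AE \<and> y1 \<cdot> u = \<alpha> \<and> m \<cdot> u = \<beta>"
    proof (rule ex1I[of _ u])
      show "u \<in> Hom C Q AE \<and> y1 \<cdot> u = \<alpha> \<and> m \<cdot> u = \<beta>" using u mu[OF u] by simp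
      fix v assume v: "v \<in> Hom C Q AE \<and> y1 \<cdot> v = \<alpha> \<and> m \<cdot> v = \<beta>"
      then have "y2 \<cdot> v = x2 \<cdot> \<beta>" using m(1) x(2) by (auto simp: arrow_simps simp flip: m(3))
      then show "v = u" using product_lift_unique[OF AE, of v Q u] u v by auto
    qed
  qed
qed

section \<open>Factorisation and lifting\<close>

text \<open>The mapping path space: \<open>Z = A \<times>\<^sub>E PE\<close> is built as the pullback of \<open>(s, t)\<close> along
  \<open>a \<times> 1\<close>, \<open>i = (1, r \<cdot> a)\<close> and \<open>\<rho>\<close> is the endpoint map.  The map \<open>i\<close> is a weak equivalence as a
  section of \<open>Z \<rightarrow> A\<close>, a pullback of the trivial fibration \<open>s\<close>.\<close>

lemma weq_fib_factorisation:
  assumes a: "a \<in> Hom C A E"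
  shows "\<exists>Z i \<rho>. i \<in> Hom C A Z \<and> i \<in> weq \<and> \<rho> \<in> Hom C Z E \<and> \<rho> \<in> fib \<and> \<rho> \<cdot> i = a"
proof -
  have A: "A \<in> Ob C" and E: "E \<in> Ob C" using Hom_Ob[OF a] by auto
  obtain PE r EE x1 x2 st where r: "r \<in> Hom C E PE" "r \<in> weq" and EE: "product C E E EE x1 x2"
    and st: "st \<in> Hom C PE EE" "st \<in> fib"
    and str: "x1 \<cdot> (st \<cdot> r) = ident C E" "x2 \<cdot> (st \<cdot> r) = ident C E"
    using path_object_exists[OF E] by blast
  obtain AE y1 y2 where AE: "product C A E AE y1 y2" using product_exists[OF A E] by blast
  have x: "x1 \<in> Hom C EE E" "x2 \<in> Hom C EE E" "x1 \<in> fib"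
    and y: "y1 \<in> Hom C AE A" "y2 \<in> Hom C AE E" "y2 \<in> fib"
    using productD[OF EE] productD[OF AE] product_proj_fib[OF EE] product_proj_fib[OF AE] by auto
  obtain m where m: "m \<in> Hom C AE EE" "x1 \<cdot> m = a \<cdot> y1" "x2 \<cdot> m = y2"
    using product_lift[OF EE Hom_comp[OF y(1) a] y(2)] by blast
  obtain Z z1 z2 where Z: "pullback C m st Z z1 z2"
    using pullback_exists[OF st(2), of m] HomD[OF m(1)] HomD[OF st(1)] by auto
  have z: "z1 \<in> Hom C Z AE" "z2 \<in> Hom C Z PE" "z1 \<in> fib"
    using pullbackD[OF Z] HomD[OF m(1)] HomD[OF st(1)] pullback_fib[OF st(2) Z] by auto
  define \<rho> where "\<rho> = y2 \<cdot> z1"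
  have \<rho>: "\<rho> \<in> Hom C Z E" "\<rho> \<in> fib"
    unfolding \<rho>_def using Hom_comp[OF z(1) y(2)] fib_comp[OF z(3) y(3)] HomD[OF z(1)] HomD[OF y(2)]
    by auto
  obtain j where j: "j \<in> Hom C A AE" "y1 \<cdot> j = ident C A" "y2 \<cdot> j = a"
    using product_lift[OF AE ident_Hom[OF A] a] by blast
  have "m \<cdot> j = st \<cdot> (r \<cdot> a)"
  proof (rule product_lift_unique[OF EE])
    show "m \<cdot> j \<in> Hom C A EE" "st \<cdot> (r \<cdot> a) \<in> Hom C A EE" using m j st r a Hom_comp by blast+
    show "x1 \<cdot> (m \<cdot> j) = x1 \<cdot> (st \<cdot> (r \<cdot> a))"
      using a m(1) j st(1) r(1) x y A E by (simp add: arrow_simps comp_reassoc[OF m(2)] comp_reassoc3[OF str(1)])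
    show "x2 \<cdot> (m \<cdot> j) = x2 \<cdot> (st \<cdot> (r \<cdot> a))"
      using a m(1) j st(1) r(1) x y A E by (simp add: arrow_simps comp_reassoc[OF m(3)] comp_reassoc3[OF str(2)])
  qed
  then obtain i where i: "i \<in> Hom C A Z" "z1 \<cdot> i = j" "z2 \<cdot> i = r \<cdot> a"
    using pullback_lift[OF Z, of j A "r \<cdot> a"] j Hom_comp[OF a r(1)] HomD[OF m(1)] HomD[OF st(1)] by auto
  have "\<rho> \<cdot> i = a" unfolding \<rho>_def using i(1) j z(1) y(2) by (simp add: arrow_simps i(2))
  define s where "s = x1 \<cdot> st"
  have s: "s \<in> Hom C PE E" "s \<in> fib" 
    unfolding s_def using Hom_comp[OF st(1) x(1)] fib_comp[OF st(2) x(3)] HomD[OF st(1)] HomD[OF x(1)]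
    by auto
  have "s \<cdot> r = ident C E" unfolding s_def using str(1) st(1) x(1) r(1) by (simp add: arrow_simps)
  then have "s \<in> weq" using weq_cancel_right[OF r(1) s(1)] ident_weq[OF E] r(2) by simp
  moreover have "pullback C a s Z (y1 \<cdot> z1) z2"
    unfolding s_def using pullback_paste[OF product_map_pullback[OF AE EE a m] Z] .
  ultimately have "y1 \<cdot> z1 \<in> weq" using pullback_trivial_fib s(2) by blast
  moreover have "(y1 \<cdot> z1) \<cdot> i = ident C A" using y(1) z(1) i j(1) by (simp add: arrow_simps j(2))
  ultimately have "i \<in> weq"
    using weq_cancel_left[OF i(1) Hom_comp[OF z(1) y(1)]] ident_weq[OF A] by simp
  then show ?thesis using i(1) \<rho> \<open>\<rho> \<cdot> i = a\<close> by blast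
qed

lemma fib_section_if_comp_weq:
  assumes q: "q \<in> Hom C E B" "q \<in> fib" and a: "a \<in> Hom C A E" and qa: "q \<cdot> a \<in> weq"
  shows "\<exists>\<sigma> \<in> Hom C B E. q \<cdot> \<sigma> = ident C B"
proof -
  obtain Z i \<rho> where i: "i \<in> Hom C A Z" "i \<in> weq" and \<rho>: "\<rho> \<in> Hom C Z E" "\<rho> \<in> fib" "\<rho> \<cdot> i = a"
    using weq_fib_factorisation[OF a] by blast
  have q\<rho>: "q \<cdot> \<rho> \<in> Hom C Z B" "q \<cdot> \<rho> \<in> fib"
    using Hom_comp[OF \<rho>(1) q(1)] fib_comp[OF \<rho>(2) q(2)] HomD[OF \<rho>(1)] HomD[OF q(1)] by auto
  have "(q \<cdot> \<rho>) \<cdot> i = q \<cdot> a" using comp_assoc[OF i(1) \<rho>(1) q(1)] \<rho>(3) by simp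
  then have "q \<cdot> \<rho> \<in> weq" using weq_cancel_right[OF i(1) q\<rho>(1)] qa i(2) by simp
  then obtain \<tau> where \<tau>: "\<tau> \<in> Hom C B Z" "(q \<cdot> \<rho>) \<cdot> \<tau> = ident C B"
    using trivial_fib_section[OF q\<rho>(2)] HomD[OF q\<rho>(1)] by auto
  have "q \<cdot> (\<rho> \<cdot> \<tau>) = ident C B" using comp_assoc[OF \<tau>(1) \<rho>(1) q(1)] \<tau>(2) by simp
  then show ?thesis using Hom_comp[OF \<tau>(1) \<rho>(1)] by blast
qed

text \<open>Only the lower triangle of the lifting problem is solved.\<close>

lemma lift_along_weq:
  assumes w: "w \<in> Hom C A B" "w \<in> weq" and p: "p \<in> Hom C E D" "p \<in> fib"
    and u: "u \<in> Hom C A E" and v: "v \<in> Hom C B D" and square: "p \<cdot> u = v \<cdot> w"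
  shows "\<exists>l \<in> Hom C B E. p \<cdot> l = v"
proof -
  obtain E' q p' where pb: "pullback C v p E' q p'"
    using pullback_exists[OF p(2), of v] HomD[OF p(1)] HomD[OF v] by auto
  have q: "q \<in> Hom C E' B" "q \<in> fib" and p': "p' \<in> Hom C E' E" "v \<cdot> q = p \<cdot> p'"
    using pullbackD[OF pb] pullback_fib[OF p(2) pb] HomD[OF v] HomD[OF p(1)] by auto
  obtain e where e: "e \<in> Hom C A E'" "q \<cdot> e = w"
    using pullback_lift[OF pb, of w A u] w(1) u square HomD[OF v] HomD[OF p(1)] by auto
  obtain \<sigma> where \<sigma>: "\<sigma> \<in> Hom C B E'" "q \<cdot> \<sigma> = ident C B"
    using fib_section_if_comp_weq[OF q e(1)] e(2) w(2) by auto
  have "p \<cdot> (p' \<cdot> \<sigma>) = v"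
    using comp_assoc[OF \<sigma>(1) p'(1) p(1)] comp_assoc[OF \<sigma>(1) q(1) v] p'(2) \<sigma>(2) comp_ident_right[OF v]
    by simp
  then show ?thesis using Hom_comp[OF \<sigma>(1) p'(1)] by blast
qed

section \<open>Fibrewise homotopies\<close>

lemma fpath_objD:
  assumes "fpath_obj C fib weq p PY r st YY q1 q2"
  shows "p \<in> fib" "pullback C p p YY q1 q2" "r \<in> Hom C (Dom C p) PY" "r \<in> weq"
    "st \<in> Hom C PY YY" "st \<in> fib" "q1 \<cdot> (st \<cdot> r) = ident C (Dom C p)" "q2 \<cdot> (st \<cdot> r) = ident C (Dom C p)"
  using assms unfolding fpath_obj_def by auto

lemma fpath_obj_source_target:
  assumes F: "fpath_obj C fib weq p PY r st YY q1 q2"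
  shows "q1 \<cdot> st \<in> Hom C PY (Dom C p)" "q2 \<cdot> st \<in> Hom C PY (Dom C p)"
    "q1 \<cdot> st \<in> fib" "q1 \<cdot> st \<in> weq"
    "(q1 \<cdot> st) \<cdot> r = ident C (Dom C p)" "(q2 \<cdot> st) \<cdot> r = ident C (Dom C p)"
    "p \<cdot> (q1 \<cdot> st) = p \<cdot> (q2 \<cdot> st)"
proof -
  note F = fpath_objD[OF F]
  have q: "q1 \<in> Hom C YY (Dom C p)" "q2 \<in> Hom C YY (Dom C p)" "p \<cdot> q1 = p \<cdot> q2" "q1 \<in> fib"
    using pullbackD[OF F(2)] pullback_fib[OF F(1,2)] by auto
  show s: "q1 \<cdot> st \<in> Hom C PY (Dom C p)" "q2 \<cdot> st \<in> Hom C PY (Dom C p)"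
    using Hom_comp[OF F(5)] q(1,2) by blast+
  show "q1 \<cdot> st \<in> fib" using fib_comp[OF F(6) q(4)] HomD[OF F(5)] HomD[OF q(1)] by simp
  show sr: "(q1 \<cdot> st) \<cdot> r = ident C (Dom C p)" "(q2 \<cdot> st) \<cdot> r = ident C (Dom C p)"
    using comp_assoc[OF F(3,5)] q(1,2) F(7,8) by auto
  show "q1 \<cdot> st \<in> weq"
    using weq_cancel_right[OF F(3) s(1)] sr(1) F(4) ident_weq Hom_Ob[OF F(3)] by simp
  show "p \<cdot> (q1 \<cdot> st) = p \<cdot> (q2 \<cdot> st)"
    using comp_assoc[OF F(5) q(1)] comp_assoc[OF F(5) q(2)] q(3) pullbackD[OF F(2)] by metis
qed

text \<open>Homotopies are built in a prescribed fibrewise path object: \<^const>\<open>fhtpy\<close> only asserts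
  some path object, and two homotopies can be composed only inside a common one.\<close>

lemma fpath_obj_homotopy_if_equal_after_weq:
  assumes F: "fpath_obj C fib weq p PY r st YY q1 q2"
    and i: "i \<in> Hom C A B" "i \<in> weq"
    and \<alpha>: "\<alpha> \<in> Hom C B (Dom C p)" and \<beta>: "\<beta> \<in> Hom C B (Dom C p)"
    and over: "p \<cdot> \<alpha> = p \<cdot> \<beta>" and agree: "\<alpha> \<cdot> i = \<beta> \<cdot> i"
  shows "\<exists>H \<in> Hom C B PY. q1 \<cdot> (st \<cdot> H) = \<alpha> \<and> q2 \<cdot> (st \<cdot> H) = \<beta>"
proof -
  note F = fpath_objD[OF F]
  have q: "q1 \<in> Hom C YY (Dom C p)" "q2 \<in> Hom C YY (Dom C p)"
    using pullbackD[OF F(2)] by auto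
  obtain v where v: "v \<in> Hom C B YY" "q1 \<cdot> v = \<alpha>" "q2 \<cdot> v = \<beta>"
    using pullback_lift[OF F(2) \<alpha> \<beta> over] by blast
  have \<alpha>i: "\<alpha> \<cdot> i \<in> Hom C A (Dom C p)" using Hom_comp[OF i(1) \<alpha>] .
  have "st \<cdot> (r \<cdot> (\<alpha> \<cdot> i)) = v \<cdot> i"
  proof (rule pullback_lift_unique[OF F(2)])
    show "st \<cdot> (r \<cdot> (\<alpha> \<cdot> i)) \<in> Hom C A YY" "v \<cdot> i \<in> Hom C A YY"
      using Hom_comp[OF Hom_comp[OF \<alpha>i F(3)] F(5)] Hom_comp[OF i(1) v(1)] by blast+
    show "q1 \<cdot> (st \<cdot> (r \<cdot> (\<alpha> \<cdot> i))) = q1 \<cdot> (v \<cdot> i)"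
      using \<alpha>i F(3,5) q(1) i(1) v(1)
      by (simp add: arrow_simps comp_reassoc3[OF F(7)] comp_reassoc[OF v(2)])
    show "q2 \<cdot> (st \<cdot> (r \<cdot> (\<alpha> \<cdot> i))) = q2 \<cdot> (v \<cdot> i)"
      using \<alpha>i F(3,5) q(2) i(1) v(1)
      by (simp add: arrow_simps comp_reassoc3[OF F(8)] comp_reassoc[OF v(3)] agree)
  qed
  then obtain H where "H \<in> Hom C B PY" "st \<cdot> H = v"
    using lift_along_weq[OF i F(5,6) Hom_comp[OF \<alpha>i F(3)] v(1)] by blast
  then show ?thesis using v by blast
qed

lemma fpath_obj_homotopy_trans:
  assumes F: "fpath_obj C fib weq p PY r st YY q1 q2"
    and G1: "G1 \<in> Hom C D PY" and G2: "G2 \<in> Hom C D PY" and meet: "q2 \<cdot> (st \<cdot> G1) = q1 \<cdot> (st \<cdot> G2)"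
  shows "\<exists>G \<in> Hom C D PY. q1 \<cdot> (st \<cdot> G) = q1 \<cdot> (st \<cdot> G1) \<and> q2 \<cdot> (st \<cdot> G) = q2 \<cdot> (st \<cdot> G2)"
proof -
  note F' = fpath_objD[OF F]
  define s where "s = q1 \<cdot> st"
  define t where "t = q2 \<cdot> st"
  have s: "s \<in> Hom C PY (Dom C p)" "s \<in> fib" "s \<in> weq" "s \<cdot> r = ident C (Dom C p)"
    and t: "t \<in> Hom C PY (Dom C p)" "t \<cdot> r = ident C (Dom C p)" and "p \<cdot> s = p \<cdot> t"
    using fpath_obj_source_target[OF F] unfolding s_def t_def by auto
  have p: "p \<in> Hom C (Dom C p) (Cod C p)" and q: "q1 \<in> Hom C YY (Dom C p)" "q2 \<in> Hom C YY (Dom C p)"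
    using pullbackD[OF F'(2)] by auto
  obtain E e1 e2 where E: "pullback C t s E e1 e2"
    using pullback_exists[OF s(2), of t] HomD[OF s(1)] HomD[OF t(1)] by auto
  have e: "e1 \<in> Hom C E PY" "e2 \<in> Hom C E PY" "t \<cdot> e1 = s \<cdot> e2" "e1 \<in> weq"
    using pullbackD[OF E] HomD[OF s(1)] HomD[OF t(1)] pullback_trivial_fib[OF s(2,3) E] by auto
  obtain w where w: "w \<in> Hom C (Dom C p) E" "e1 \<cdot> w = r" "e2 \<cdot> w = r"
    using pullback_lift[OF E, of r "Dom C p" r] F'(3) s(4) t(2) HomD[OF s(1)] HomD[OF t(1)] by auto
  have "w \<in> weq" using weq_cancel_left[OF w(1) e(1)] w(2) F'(4) e(4) by simp
  moreover have "(s \<cdot> e1) \<cdot> w = (t \<cdot> e2) \<cdot> w"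
    using comp_assoc[OF w(1) e(1) s(1)] comp_assoc[OF w(1) e(2) t(1)] w(2,3) s(4) t(2) by simp
  moreover have "p \<cdot> (s \<cdot> e1) = p \<cdot> (t \<cdot> e2)"
  proof -
    have "p \<cdot> (s \<cdot> e1) = (p \<cdot> t) \<cdot> e1" using comp_assoc[OF e(1) s(1) p] \<open>p \<cdot> s = p \<cdot> t\<close> by simp
    also have "\<dots> = (p \<cdot> s) \<cdot> e2" using comp_assoc[OF e(1) t(1) p] comp_assoc[OF e(2) s(1) p] e(3) by simp
    also have "\<dots> = p \<cdot> (t \<cdot> e2)" using comp_assoc[OF e(2) t(1) p] \<open>p \<cdot> s = p \<cdot> t\<close> by simp
    finally show ?thesis .
  qed
  ultimately obtain L where L: "L \<in> Hom C E PY" "q1 \<cdot> (st \<cdot> L) = s \<cdot> e1" "q2 \<cdot> (st \<cdot> L) = t \<cdot> e2"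
    using fpath_obj_homotopy_if_equal_after_weq[OF F w(1), of "s \<cdot> e1" "t \<cdot> e2"]
      Hom_comp[OF e(1) s(1)] Hom_comp[OF e(2) t(1)] by blast
  have st_G: "q1 \<cdot> (st \<cdot> G) = s \<cdot> G" "q2 \<cdot> (st \<cdot> G) = t \<cdot> G" if "G \<in> Hom C X PY" for G X
    using comp_assoc[OF that F'(5) q(1)] comp_assoc[OF that F'(5) q(2)] unfolding s_def t_def by simp_all
  then have "t \<cdot> G1 = s \<cdot> G2" using meet G1 G2 by simp
  then obtain g where g: "g \<in> Hom C D E" "e1 \<cdot> g = G1" "e2 \<cdot> g = G2"
    using pullback_lift[OF E, of G1 D G2] G1 G2 HomD[OF s(1)] HomD[OF t(1)] by auto
  have Lg: "L \<cdot> g \<in> Hom C D PY" using Hom_comp[OF g(1) L(1)] .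
  have "s \<cdot> (L \<cdot> g) = s \<cdot> G1" "t \<cdot> (L \<cdot> g) = t \<cdot> G2"
    using comp_assoc[OF g(1) L(1) s(1)] comp_assoc[OF g(1) L(1) t(1)] st_G[OF L(1)] L(2,3)
      comp_assoc[OF g(1) e(1) s(1)] comp_assoc[OF g(1) e(2) t(1)] g(2,3) by simp_all
  then show ?thesis using Lg st_G[OF Lg] st_G[OF G1] st_G[OF G2] by auto
qed

text \<open>Transport in \<open>Q = \<Pi> \<times>\<^sub>J I\<close> along paths in \<open>\<Pi>\<close>: \<open>W\<close> consists of a point of \<open>Q\<close>
  together with a path starting at its first component, \<open>z\<close> moves the point to the end of
  the path, and \<open>c\<close> is the constant path.\<close>

lemma pullback_path_transport:
  assumes Q: "pullback C \<pi> f Q a b" and FP: "fpath_obj C fib weq \<pi> P r st PP y1 y2"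
  shows "\<exists>W w1 w2 z c. pullback C a (y1 \<cdot> st) W w1 w2 \<and> z \<in> Hom C W Q \<and>
    a \<cdot> z = (y2 \<cdot> st) \<cdot> w2 \<and> b \<cdot> z = b \<cdot> w1 \<and> c \<in> Hom C Q W \<and> c \<in> weq \<and> w1 \<cdot> c = ident C Q \<and> z \<cdot> c = ident C Q"
proof -
  define s where "s = y1 \<cdot> st"
  define t where "t = y2 \<cdot> st"
  define \<Pi> where "\<Pi> = Dom C \<pi>"
  have s: "s \<in> Hom C P \<Pi>" "s \<in> fib" "s \<in> weq" "s \<cdot> r = ident C \<Pi>"
    and t: "t \<in> Hom C P \<Pi>" "t \<cdot> r = ident C \<Pi>" and "\<pi> \<cdot> s = \<pi> \<cdot> t"
    using fpath_obj_source_target[OF FP] unfolding s_def t_def \<Pi>_def by auto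
  have \<pi>: "\<pi> \<in> Hom C \<Pi> (Cod C \<pi>)" and f: "f \<in> Hom C (Dom C f) (Cod C \<pi>)"
    and ab: "a \<in> Hom C Q \<Pi>" "b \<in> Hom C Q (Dom C f)" "\<pi> \<cdot> a = f \<cdot> b"
    using pullbackD[OF Q] unfolding \<Pi>_def by auto
  have r: "r \<in> Hom C \<Pi> P" using fpath_objD(3)[OF FP] unfolding \<Pi>_def .
  have Qo: "Q \<in> Ob C" using Hom_Ob[OF ab(1)] by blast
  obtain W w1 w2 where W: "pullback C a s W w1 w2"
    using pullback_exists[OF s(2), of a] HomD[OF s(1)] HomD[OF ab(1)] by auto
  have w: "w1 \<in> Hom C W Q" "w2 \<in> Hom C W P" "a \<cdot> w1 = s \<cdot> w2" "w1 \<in> weq"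
    using pullbackD[OF W] HomD[OF s(1)] HomD[OF ab(1)] pullback_trivial_fib[OF s(2,3) W] by auto
  have "\<pi> \<cdot> (t \<cdot> w2) = f \<cdot> (b \<cdot> w1)"
    using comp_assoc[OF w(2) t(1) \<pi>] comp_assoc[OF w(2) s(1) \<pi>] comp_assoc[OF w(1) ab(1) \<pi>]
      comp_assoc[OF w(1) ab(2) f] \<open>\<pi> \<cdot> s = \<pi> \<cdot> t\<close> w(3) ab(3) by simp
  then obtain z where z: "z \<in> Hom C W Q" "a \<cdot> z = t \<cdot> w2" "b \<cdot> z = b \<cdot> w1"
    using pullback_lift[OF Q, of "t \<cdot> w2" W "b \<cdot> w1"] Hom_comp[OF w(2) t(1)] Hom_comp[OF w(1) ab(2)]
    unfolding \<Pi>_def by auto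
  have "a \<cdot> ident C Q = s \<cdot> (r \<cdot> a)"
    using comp_ident_right[OF ab(1)] comp_assoc[OF ab(1) r s(1)] s(4) comp_ident_left[OF ab(1)] by simp
  then obtain c where c: "c \<in> Hom C Q W" "w1 \<cdot> c = ident C Q" "w2 \<cdot> c = r \<cdot> a"
    using pullback_lift[OF W, of "ident C Q" Q "r \<cdot> a"] ident_Hom[OF Qo] Hom_comp[OF ab(1) r]
      HomD[OF s(1)] HomD[OF ab(1)] by auto
  have "c \<in> weq" using weq_cancel_left[OF c(1) w(1)] c(2) ident_weq[OF Qo] w(4) by simp
  moreover have "z \<cdot> c = ident C Q"
  proof (rule pullback_lift_unique[OF Q Hom_comp[OF c(1) z(1)] ident_Hom[OF Qo]])
    show "a \<cdot> (z \<cdot> c) = a \<cdot> ident C Q"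
      using comp_assoc[OF c(1) z(1) ab(1)] comp_assoc[OF c(1) w(2) t(1)] comp_assoc[OF ab(1) r t(1)]
        z(2) c(3) t(2) comp_ident_left[OF ab(1)] comp_ident_right[OF ab(1)] by simp
    show "b \<cdot> (z \<cdot> c) = b \<cdot> ident C Q"
      using comp_assoc[OF c(1) z(1) ab(2)] comp_assoc[OF c(1) w(1) ab(2)] z(3) c(2) by simp
  qed
  ultimately show ?thesis using W z c unfolding s_def t_def by blast
qed

lemma pullback_fhtpy_transfer:
  assumes Q: "pullback C \<pi> f Q a b" and htpy: "fhtpy C fib weq \<pi> k k'"
    and FX: "fpath_obj C fib weq d PX rX stX XX x1 x2"
    and \<epsilon>: "\<epsilon> \<in> Hom C Q (Dom C d)" "d \<cdot> \<epsilon> = b" and e: "e \<in> Hom C R (Dom C k)"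
    and v: "v \<in> Hom C R Q" "a \<cdot> v = k \<cdot> e" and v': "v' \<in> Hom C R Q" "a \<cdot> v' = k' \<cdot> e"
    and base: "b \<cdot> v = b \<cdot> v'"
  shows "\<exists>G \<in> Hom C R PX. x1 \<cdot> (stX \<cdot> G) = \<epsilon> \<cdot> v \<and> x2 \<cdot> (stX \<cdot> G) = \<epsilon> \<cdot> v'"
proof -
  obtain P r st PP y1 y2 H where FP: "fpath_obj C fib weq \<pi> P r st PP y1 y2"
    and H: "H \<in> Hom C (Dom C k) P" "y1 \<cdot> (st \<cdot> H) = k" "y2 \<cdot> (st \<cdot> H) = k'"
    using htpy unfolding fhtpy_def by blast
  obtain W w1 w2 z c where W: "pullback C a (y1 \<cdot> st) W w1 w2" and z: "z \<in> Hom C W Q"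
    "a \<cdot> z = (y2 \<cdot> st) \<cdot> w2" "b \<cdot> z = b \<cdot> w1" and c: "c \<in> Hom C Q W" "c \<in> weq" "w1 \<cdot> c = ident C Q"
    "z \<cdot> c = ident C Q"
    using pullback_path_transport[OF Q FP] by blast
  note FP' = fpath_objD[OF FP] and FX' = fpath_objD[OF FX]
  have y: "y1 \<in> Hom C PP (Dom C \<pi>)" "y2 \<in> Hom C PP (Dom C \<pi>)" using pullbackD[OF FP'(2)] by auto
  have ab: "a \<in> Hom C Q (Dom C \<pi>)" "b \<in> Hom C Q (Dom C f)" using pullbackD[OF Q] by auto
  have w: "w1 \<in> Hom C W Q" "w2 \<in> Hom C W P" "a \<cdot> w1 = (y1 \<cdot> st) \<cdot> w2"
    using pullbackD[OF W] HomD[OF Hom_comp[OF FP'(5) y(1)]] HomD[OF ab(1)] by auto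
  have d: "d \<in> Hom C (Dom C d) (Dom C f)"
    using HomI[OF fib_Ar[OF FX'(1)]] HomD[OF \<epsilon>(1)] HomD[OF ab(2)] Cod_comp fib_Ar[OF FX'(1)] \<epsilon>(2)
    by (metis HomD)
  have "(\<epsilon> \<cdot> w1) \<cdot> c = (\<epsilon> \<cdot> z) \<cdot> c"
    using comp_assoc[OF c(1) w(1) \<epsilon>(1)] comp_assoc[OF c(1) z(1) \<epsilon>(1)] c(3,4) by simp
  moreover have "d \<cdot> (\<epsilon> \<cdot> w1) = d \<cdot> (\<epsilon> \<cdot> z)"
    using comp_assoc[OF w(1) \<epsilon>(1) d] comp_assoc[OF z(1) \<epsilon>(1) d] \<epsilon>(2) z(3) by simp
  ultimately obtain L where L: "L \<in> Hom C W PX" "x1 \<cdot> (stX \<cdot> L) = \<epsilon> \<cdot> w1" "x2 \<cdot> (stX \<cdot> L) = \<epsilon> \<cdot> z"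
    using fpath_obj_homotopy_if_equal_after_weq[OF FX c(1,2), of "\<epsilon> \<cdot> w1" "\<epsilon> \<cdot> z"]
      Hom_comp[OF w(1) \<epsilon>(1)] Hom_comp[OF z(1) \<epsilon>(1)] by blast
  have path_end: "(y \<cdot> st) \<cdot> (H \<cdot> e) = (y \<cdot> (st \<cdot> H)) \<cdot> e" if "y \<in> Hom C PP (Dom C \<pi>)" for y
    using comp_assoc[OF e H(1) FP'(5)] comp_assoc[OF e Hom_comp[OF H(1) FP'(5)] that]
      comp_assoc[OF Hom_comp[OF e H(1)] FP'(5) that] by simp
  obtain x where x: "x \<in> Hom C R W" "w1 \<cdot> x = v" "w2 \<cdot> x = H \<cdot> e"
    using pullback_lift[OF W, of v R "H \<cdot> e"] v Hom_comp[OF e H(1)] path_end[OF y(1)] H(2)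
      HomD[OF Hom_comp[OF FP'(5) y(1)]] HomD[OF ab(1)] by auto
  have "z \<cdot> x = v'"
  proof (rule pullback_lift_unique[OF Q Hom_comp[OF x(1) z(1)] v'(1)])
    show "a \<cdot> (z \<cdot> x) = a \<cdot> v'"
      using comp_assoc[OF x(1) z(1) ab(1)] comp_assoc[OF x(1) w(2) Hom_comp[OF FP'(5) y(2)]]
        z(2) x(3) path_end[OF y(2)] H(3) v'(2) by simp
    show "b \<cdot> (z \<cdot> x) = b \<cdot> v'"
      using comp_assoc[OF x(1) z(1) ab(2)] comp_assoc[OF x(1) w(1) ab(2)] z(3) x(2) base by simp
  qed
  moreover have "x' \<cdot> (stX \<cdot> (L \<cdot> x)) = (x' \<cdot> (stX \<cdot> L)) \<cdot> x" if "x' \<in> Hom C XX (Dom C d)" for x'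
    using comp_assoc[OF x(1) L(1) FX'(5)] comp_assoc[OF x(1) Hom_comp[OF L(1) FX'(5)] that] by simp
  ultimately have "x1 \<cdot> (stX \<cdot> (L \<cdot> x)) = \<epsilon> \<cdot> v" "x2 \<cdot> (stX \<cdot> (L \<cdot> x)) = \<epsilon> \<cdot> v'"
    using pullbackD[OF FX'(2)] L(2,3) x(2) comp_assoc[OF x(1) w(1) \<epsilon>(1)] comp_assoc[OF x(1) z(1) \<epsilon>(1)]
    by simp_all
  then show ?thesis using Hom_comp[OF x(1) L(1)] by blast
qed

section \<open>Composition of homotopy \<open>\<Pi>\<close>-types\<close>

lemma pullback_along_composite_split:
  assumes h: "h \<in> Hom C D J" and g: "g \<in> Hom C J1 J" "g \<in> fib" and f: "f \<in> Hom C I J1"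
    and R: "pullback C h (g \<cdot> f) R e1 e2"
  shows "\<exists>R' r1 r2 e. pullback C h g R' r1 r2 \<and> e \<in> Hom C R R' \<and> r1 \<cdot> e = e1 \<and> r2 \<cdot> e = f \<cdot> e2 \<and>
    pullback C r2 f R e e2"
proof -
  obtain R' r1 r2 where R': "pullback C h g R' r1 r2"
    using pullback_exists[OF g(2), of h] HomD[OF h] HomD[OF g(1)] by auto
  have gf: "g \<cdot> f \<in> Hom C I J" using Hom_comp[OF f g(1)] .
  have e12: "e1 \<in> Hom C R D" "e2 \<in> Hom C R I" "h \<cdot> e1 = g \<cdot> (f \<cdot> e2)"
    using pullbackD[OF R] HomD[OF h] HomD[OF gf] comp_assoc[OF _ f g(1)] by auto
  then obtain e where e: "e \<in> Hom C R R'" "r1 \<cdot> e = e1" "r2 \<cdot> e = f \<cdot> e2"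
    using pullback_lift[OF R', of e1 R "f \<cdot> e2"] Hom_comp[OF e12(2) f] HomD[OF h] HomD[OF g(1)] by auto
  then show ?thesis using R' pullback_cancel[OF R' R f g(1) e] by blast
qed

lemma fhtpyI:
  assumes F: "fpath_obj C fib weq p PY r st YY q1 q2" and H: "H \<in> Hom C D PY"
    and "q1 \<cdot> (st \<cdot> H) = m" and "q2 \<cdot> (st \<cdot> H) = m'"
  shows "fhtpy C fib weq p m m'"
proof -
  have q: "q1 \<in> Hom C YY (Dom C p)" "q2 \<in> Hom C YY (Dom C p)" "p \<cdot> q1 = p \<cdot> q2"
    and p: "p \<in> Hom C (Dom C p) (Cod C p)"
    using pullbackD[OF fpath_objD(2)[OF F]] by auto
  have stH: "st \<cdot> H \<in> Hom C D YY" using Hom_comp[OF H fpath_objD(5)[OF F]] .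
  have "m \<in> Hom C D (Dom C p)" "m' \<in> Hom C D (Dom C p)" "p \<cdot> m = p \<cdot> m'"
    using Hom_comp[OF stH q(1)] Hom_comp[OF stH q(2)] comp_assoc[OF stH q(1) p] comp_assoc[OF stH q(2) p]
      q(3) assms(3,4) by auto
  then show ?thesis unfolding fhtpy_def using F H assms(3,4) HomD by metis
qed

lemma is_piD:
  assumes "is_pi C fib weq strong g f Pi \<pi> Q q1 q2 \<epsilon>"
  shows "g \<in> fib" "f \<in> fib" "Cod C g = Dom C f" "\<pi> \<in> fib" "\<pi> \<in> Hom C Pi (Cod C f)"
    "pullback C \<pi> f Q q1 q2" "\<epsilon> \<in> Hom C Q (Dom C g)" "g \<cdot> \<epsilon> = q2"
  using assms unfolding is_pi_def by auto

lemma is_pi_weakD: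
  assumes "is_pi C fib weq strong g f Pi \<pi> Q q1 q2 \<epsilon>"
    and "h \<in> Hom C D (Cod C f)" "pullback C h f R d1 d2" "m \<in> Hom C R (Dom C g)" "g \<cdot> m = d2"
  shows "\<exists>k \<in> Hom C D Pi. \<pi> \<cdot> k = h \<and>
    (\<forall>u. u \<in> Hom C R Q \<and> q1 \<cdot> u = k \<cdot> d1 \<and> q2 \<cdot> u = d2 \<longrightarrow> fhtpy C fib weq g (\<epsilon> \<cdot> u) m)"
proof -
  have "\<forall>D h R d1 d2 m. h \<in> Hom C D (Cod C f) \<and> pullback C h f R d1 d2 \<and>
      m \<in> Hom C R (Dom C g) \<and> g \<cdot> m = d2 \<longrightarrow> (\<exists>k \<in> Hom C D Pi. \<pi> \<cdot> k = h \<and>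
      (\<forall>u. u \<in> Hom C R Q \<and> q1 \<cdot> u = k \<cdot> d1 \<and> q2 \<cdot> u = d2 \<longrightarrow> fhtpy C fib weq g (\<epsilon> \<cdot> u) m))"
    using assms(1) unfolding is_pi_def by (elim conjE)
  then show ?thesis using assms(2-) by blast
qed

lemma is_pi_strongD:
  assumes "is_pi C fib weq strong g f Pi \<pi> Q q1 q2 \<epsilon>" and strong
    and "h \<in> Hom C D (Cod C f)" "pullback C h f R d1 d2"
    and "k \<in> Hom C D Pi" "\<pi> \<cdot> k = h" "u \<in> Hom C R Q" "q1 \<cdot> u = k \<cdot> d1" "q2 \<cdot> u = d2"
    and "k' \<in> Hom C D Pi" "\<pi> \<cdot> k' = h" "u' \<in> Hom C R Q" "q1 \<cdot> u' = k' \<cdot> d1" "q2 \<cdot> u' = d2"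
    and "fhtpy C fib weq g (\<epsilon> \<cdot> u) (\<epsilon> \<cdot> u')"
  shows "fhtpy C fib weq \<pi> k k'"
proof -
  have "\<forall>D h R d1 d2 k k' u u'. h \<in> Hom C D (Cod C f) \<and> pullback C h f R d1 d2 \<and>
      k \<in> Hom C D Pi \<and> k' \<in> Hom C D Pi \<and> \<pi> \<cdot> k = h \<and> \<pi> \<cdot> k' = h \<and>
      u \<in> Hom C R Q \<and> q1 \<cdot> u = k \<cdot> d1 \<and> q2 \<cdot> u = d2 \<and>
      u' \<in> Hom C R Q \<and> q1 \<cdot> u' = k' \<cdot> d1 \<and> q2 \<cdot> u' = d2 \<and>
      fhtpy C fib weq g (\<epsilon> \<cdot> u) (\<epsilon> \<cdot> u') \<longrightarrow> fhtpy C fib weq \<pi> k k'"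
    using assms(1,2) unfolding is_pi_def by (elim conjE) simp
  then show ?thesis using assms(3-) by blast
qed

end

text \<open>The data for \<open>\<Pi>\<^sub>g(\<Pi>\<^sub>f(d))\<close>: \<open>Q\<close> is \<open>Q\<^sub>2 \<times>\<^bsub>J\<^sub>1\<^esub> I\<close>, which is \<open>\<Pi>\<^sub>2 \<times>\<^sub>J I\<close> by pasting, and
  \<open>w = \<epsilon>\<^sub>2 \<times>\<^bsub>J\<^sub>1\<^esub> I : Q \<rightarrow> Q\<^sub>1\<close>; the composite evaluation map is \<open>\<epsilon>\<^sub>1 \<cdot> w\<close>.\<close>

locale pi_composition = path_cat +
  fixes strong :: bool
    and d f Pi1 \<pi>1 Q1 a1 b1 \<epsilon>1 g Pi2 \<pi>2 Q2 a2 b2 \<epsilon>2 Q c1 c2 w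
  assumes inner: "is_pi C fib weq strong d f Pi1 \<pi>1 Q1 a1 b1 \<epsilon>1"
    and outer: "is_pi C fib weq strong \<pi>1 g Pi2 \<pi>2 Q2 a2 b2 \<epsilon>2"
    and Q: "pullback C b2 f Q c1 c2"
    and w: "w \<in> Hom C Q Q1" "a1 \<cdot> w = \<epsilon>2 \<cdot> c1" "b1 \<cdot> w = c2"
begin

lemma arrows:
  "d \<in> Hom C (Dom C d) (Dom C f)" "f \<in> Hom C (Dom C f) (Cod C f)" "g \<in> Hom C (Cod C f) (Cod C g)"
  "\<pi>1 \<in> Hom C Pi1 (Cod C f)" "\<pi>2 \<in> Hom C Pi2 (Cod C g)"
  "a1 \<in> Hom C Q1 Pi1" "b1 \<in> Hom C Q1 (Dom C f)" "\<pi>1 \<cdot> a1 = f \<cdot> b1"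
  "a2 \<in> Hom C Q2 Pi2" "b2 \<in> Hom C Q2 (Cod C f)" "\<pi>2 \<cdot> a2 = g \<cdot> b2"
  "\<epsilon>1 \<in> Hom C Q1 (Dom C d)" "d \<cdot> \<epsilon>1 = b1" "\<epsilon>2 \<in> Hom C Q2 Pi1" "\<pi>1 \<cdot> \<epsilon>2 = b2"
  "c1 \<in> Hom C Q Q2" "c2 \<in> Hom C Q (Dom C f)" "b2 \<cdot> c1 = f \<cdot> c2"
proof -
  note i = is_piD[OF inner] and o = is_piD[OF outer]
  show \<pi>1: "\<pi>1 \<in> Hom C Pi1 (Cod C f)" and "\<pi>2 \<in> Hom C Pi2 (Cod C g)" using i(5) o(5) .
  show "d \<in> Hom C (Dom C d) (Dom C f)" "f \<in> Hom C (Dom C f) (Cod C f)" "g \<in> Hom C (Cod C f) (Cod C g)"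
    using HomI[OF fib_Ar[OF i(1)]] HomI[OF fib_Ar[OF i(2)]] HomI[OF fib_Ar[OF o(2)]] i(3) o(3) HomD[OF \<pi>1]
    by auto
  show "a1 \<in> Hom C Q1 Pi1" "b1 \<in> Hom C Q1 (Dom C f)" "\<pi>1 \<cdot> a1 = f \<cdot> b1"
    "a2 \<in> Hom C Q2 Pi2" "b2 \<in> Hom C Q2 (Cod C f)" "\<pi>2 \<cdot> a2 = g \<cdot> b2"
    using pullbackD[OF i(6)] pullbackD[OF o(6)] HomD[OF i(5)] HomD[OF o(5)] o(3) by auto
  then show "\<epsilon>1 \<in> Hom C Q1 (Dom C d)" "d \<cdot> \<epsilon>1 = b1" "\<epsilon>2 \<in> Hom C Q2 Pi1" "\<pi>1 \<cdot> \<epsilon>2 = b2"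
    using i(7,8) o(7,8) HomD[OF \<pi>1] by auto
  show "c1 \<in> Hom C Q Q2" "c2 \<in> Hom C Q (Dom C f)" "b2 \<cdot> c1 = f \<cdot> c2"
    using pullbackD[OF Q] \<open>b2 \<in> Hom C Q2 (Cod C f)\<close> HomD by auto
qed

lemma composite_pullback: "pullback C \<pi>2 (g \<cdot> f) Q (a2 \<cdot> c1) c2"
  using pullback_paste[OF is_piD(6)[OF outer] Q] .

lemma composite_eval: "\<epsilon>1 \<cdot> w \<in> Hom C Q (Dom C d)" "d \<cdot> (\<epsilon>1 \<cdot> w) = c2"
  using Hom_comp[OF w(1) arrows(12)] comp_assoc[OF w(1) arrows(12,1)] arrows(13) w(3) by simp_all

text \<open>Over a pullback \<open>R = D \<times>\<^sub>J I\<close>, split as \<open>R' = D \<times>\<^sub>J J\<^sub>1\<close> and \<open>R = R' \<times>\<^bsub>J\<^sub>1\<^esub> I\<close>, a map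
  \<open>k \<times>\<^sub>J I : R \<rightarrow> Q\<close> factors through \<open>k \<times>\<^sub>J J\<^sub>1 : R' \<rightarrow> Q\<^sub>2\<close>, and composing with \<open>w\<close> gives
  \<open>(\<epsilon>\<^sub>2 \<cdot> (k \<times>\<^sub>J J\<^sub>1)) \<times>\<^bsub>J\<^sub>1\<^esub> I\<close>.\<close>

lemma restriction_factors:
  assumes R': "pullback C h g R' r1 r2" and e: "e \<in> Hom C R R'" "r1 \<cdot> e = d1" "r2 \<cdot> e = f \<cdot> d2"
    and k: "k \<in> Hom C D Pi2" "\<pi>2 \<cdot> k = h"
    and u: "u \<in> Hom C R Q" "(a2 \<cdot> c1) \<cdot> u = k \<cdot> d1" "c2 \<cdot> u = d2"
  shows "\<exists>u2 \<in> Hom C R' Q2. a2 \<cdot> u2 = k \<cdot> r1 \<and> b2 \<cdot> u2 = r2 \<and>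
    w \<cdot> u \<in> Hom C R Q1 \<and> a1 \<cdot> (w \<cdot> u) = (\<epsilon>2 \<cdot> u2) \<cdot> e \<and> b1 \<cdot> (w \<cdot> u) = d2"
proof -
  note A = arrows
  have h: "h \<in> Hom C D (Cod C g)" using Hom_comp[OF k(1) A(5)] k(2) by simp
  then have r: "r1 \<in> Hom C R' D" "r2 \<in> Hom C R' (Cod C f)" "h \<cdot> r1 = g \<cdot> r2"
    using pullbackD[OF R'] HomD[OF h] HomD[OF A(3)] by auto
  have "\<pi>2 \<cdot> (k \<cdot> r1) = g \<cdot> r2" using comp_assoc[OF r(1) k(1) A(5)] k(2) r(3) by simp
  then obtain u2 where u2: "u2 \<in> Hom C R' Q2" "a2 \<cdot> u2 = k \<cdot> r1" "b2 \<cdot> u2 = r2"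
    using pullback_lift[OF is_piD(6)[OF outer], of "k \<cdot> r1" R' r2] Hom_comp[OF r(1) k(1)] r(2)
      HomD[OF A(5)] HomD[OF A(3)] by auto
  have c1u: "c1 \<cdot> u = u2 \<cdot> e"
  proof (rule pullback_lift_unique[OF is_piD(6)[OF outer] Hom_comp[OF u(1) A(16)] Hom_comp[OF e(1) u2(1)]])
    show "a2 \<cdot> (c1 \<cdot> u) = a2 \<cdot> (u2 \<cdot> e)"
      using comp_assoc[OF u(1) A(16,9)] comp_assoc[OF e(1) u2(1) A(9)] comp_assoc[OF e(1) r(1) k(1)]
        u(2) u2(2) e(2) by simp
    show "b2 \<cdot> (c1 \<cdot> u) = b2 \<cdot> (u2 \<cdot> e)"
      using comp_assoc[OF u(1) A(16,10)] comp_assoc[OF e(1) u2(1) A(10)] comp_assoc[OF u(1) A(17,2)]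
        A(18) u(3) u2(3) e(3) by simp
  qed
  have "a1 \<cdot> (w \<cdot> u) = (\<epsilon>2 \<cdot> u2) \<cdot> e"
    using comp_assoc[OF u(1) w(1) A(6)] comp_assoc[OF u(1) A(16,14)] comp_assoc[OF e(1) u2(1) A(14)]
      w(2) c1u by simp
  moreover have "b1 \<cdot> (w \<cdot> u) = d2" using comp_assoc[OF u(1) w(1) A(7)] w(3) u(3) by simp
  ultimately show ?thesis using u2 Hom_comp[OF u(1) w(1)] by blast
qed

lemma split_pullback:
  assumes h: "h \<in> Hom C D (Cod C g)" and R: "pullback C h (g \<cdot> f) R d1 d2"
  obtains R' r1 r2 e where "pullback C h g R' r1 r2" "r1 \<in> Hom C R' D" "r2 \<in> Hom C R' (Cod C f)"
    "e \<in> Hom C R R'" "r1 \<cdot> e = d1" "r2 \<cdot> e = f \<cdot> d2" "pullback C r2 f R e d2"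
proof -
  obtain R' r1 r2 e where R': "pullback C h g R' r1 r2" and e: "e \<in> Hom C R R'" "r1 \<cdot> e = d1"
    "r2 \<cdot> e = f \<cdot> d2" "pullback C r2 f R e d2"
    using pullback_along_composite_split[OF h arrows(3) is_piD(2)[OF outer] arrows(2) R] by blast
  moreover have "r1 \<in> Hom C R' D" "r2 \<in> Hom C R' (Cod C f)"
    using pullbackD[OF R'] HomD[OF h] HomD[OF arrows(3)] by auto
  ultimately show ?thesis using that by blast
qed

lemma composite_weak_universal:
  assumes h: "h \<in> Hom C D (Cod C g)" and R: "pullback C h (g \<cdot> f) R d1 d2"
    and m: "m \<in> Hom C R (Dom C d)" "d \<cdot> m = d2"
  shows "\<exists>k \<in> Hom C D Pi2. \<pi>2 \<cdot> k = h \<and> (\<forall>u. u \<in> Hom C R Q \<and> (a2 \<cdot> c1) \<cdot> u = k \<cdot> d1 \<and> c2 \<cdot> u = d2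
    \<longrightarrow> fhtpy C fib weq d ((\<epsilon>1 \<cdot> w) \<cdot> u) m)"
proof -
  note A = arrows
  obtain R' r1 r2 e where R': "pullback C h g R' r1 r2" and r: "r1 \<in> Hom C R' D" "r2 \<in> Hom C R' (Cod C f)"
    and e: "e \<in> Hom C R R'" "r1 \<cdot> e = d1" "r2 \<cdot> e = f \<cdot> d2" and R_split: "pullback C r2 f R e d2"
    using split_pullback[OF h R] .
  obtain k1 where k1: "k1 \<in> Hom C R' Pi1" "\<pi>1 \<cdot> k1 = r2" and K1: "\<And>u. u \<in> Hom C R Q1 \<Longrightarrow>
      a1 \<cdot> u = k1 \<cdot> e \<Longrightarrow> b1 \<cdot> u = d2 \<Longrightarrow> fhtpy C fib weq d (\<epsilon>1 \<cdot> u) m"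
    using is_pi_weakD[OF inner r(2) R_split m] by blast
  obtain k where k: "k \<in> Hom C D Pi2" "\<pi>2 \<cdot> k = h" and K2: "\<And>u. u \<in> Hom C R' Q2 \<Longrightarrow>
      a2 \<cdot> u = k \<cdot> r1 \<Longrightarrow> b2 \<cdot> u = r2 \<Longrightarrow> fhtpy C fib weq \<pi>1 (\<epsilon>2 \<cdot> u) k1"
    using is_pi_weakD[OF outer h R' _ k1(2)] k1(1) HomD[OF A(4)] by auto
  have "fhtpy C fib weq d ((\<epsilon>1 \<cdot> w) \<cdot> u) m"
    if u: "u \<in> Hom C R Q" "(a2 \<cdot> c1) \<cdot> u = k \<cdot> d1" "c2 \<cdot> u = d2" for u
  proof -
    obtain u2 where u2: "u2 \<in> Hom C R' Q2" "a2 \<cdot> u2 = k \<cdot> r1" "b2 \<cdot> u2 = r2"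
      and wu: "w \<cdot> u \<in> Hom C R Q1" "a1 \<cdot> (w \<cdot> u) = (\<epsilon>2 \<cdot> u2) \<cdot> e" "b1 \<cdot> (w \<cdot> u) = d2"
      using restriction_factors[OF R' e(1-3) k u] by blast
    have "\<pi>1 \<cdot> (k1 \<cdot> e) = f \<cdot> d2" using comp_assoc[OF e(1) k1(1) A(4)] k1(2) e(3) by simp
    then obtain u1 where u1: "u1 \<in> Hom C R Q1" "a1 \<cdot> u1 = k1 \<cdot> e" "b1 \<cdot> u1 = d2"
      using pullback_lift[OF is_piD(6)[OF inner], of "k1 \<cdot> e" R d2] Hom_comp[OF e(1) k1(1)]
        pullbackD[OF R_split] HomD[OF A(4)] HomD[OF A(2)] by auto
    obtain PX rX stX XX x1 x2 G2 where FX: "fpath_obj C fib weq d PX rX stX XX x1 x2"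
      and G2: "G2 \<in> Hom C R PX" "x1 \<cdot> (stX \<cdot> G2) = \<epsilon>1 \<cdot> u1" "x2 \<cdot> (stX \<cdot> G2) = m"
      using K1[OF u1] HomD[OF Hom_comp[OF u1(1) A(12)]] unfolding fhtpy_def by auto
    obtain G1 where G1: "G1 \<in> Hom C R PX" "x1 \<cdot> (stX \<cdot> G1) = \<epsilon>1 \<cdot> (w \<cdot> u)" "x2 \<cdot> (stX \<cdot> G1) = \<epsilon>1 \<cdot> u1"
      using pullback_fhtpy_transfer[OF is_piD(6)[OF inner] K2[OF u2] FX A(12,13) _ wu(1,2) u1(1,2)]
        e(1) HomD[OF Hom_comp[OF u2(1) A(14)]] wu(3) u1(3) by auto
    obtain G where "G \<in> Hom C R PX" "x1 \<cdot> (stX \<cdot> G) = \<epsilon>1 \<cdot> (w \<cdot> u)" "x2 \<cdot> (stX \<cdot> G) = m"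
      using fpath_obj_homotopy_trans[OF FX G1(1) G2(1)] G1(2,3) G2(2,3) by auto
    then show ?thesis using fhtpyI[OF FX] comp_assoc[OF u(1) w(1) A(12)] by metis
  qed
  then show ?thesis using k by blast
qed

lemma composite_strong_universal:
  assumes strong and h: "h \<in> Hom C D (Cod C g)" and R: "pullback C h (g \<cdot> f) R d1 d2"
    and k: "k \<in> Hom C D Pi2" "\<pi>2 \<cdot> k = h" and u: "u \<in> Hom C R Q" "(a2 \<cdot> c1) \<cdot> u = k \<cdot> d1" "c2 \<cdot> u = d2"
    and k': "k' \<in> Hom C D Pi2" "\<pi>2 \<cdot> k' = h" and u': "u' \<in> Hom C R Q" "(a2 \<cdot> c1) \<cdot> u' = k' \<cdot> d1" "c2 \<cdot> u' = d2"
    and htpy: "fhtpy C fib weq d ((\<epsilon>1 \<cdot> w) \<cdot> u) ((\<epsilon>1 \<cdot> w) \<cdot> u')"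
  shows "fhtpy C fib weq \<pi>2 k k'"
proof -
  obtain R' r1 r2 e where R': "pullback C h g R' r1 r2" and r: "r2 \<in> Hom C R' (Cod C f)"
    and e: "e \<in> Hom C R R'" "r1 \<cdot> e = d1" "r2 \<cdot> e = f \<cdot> d2" and R_split: "pullback C r2 f R e d2"
    using split_pullback[OF h R] by metis
  obtain u2 where u2: "u2 \<in> Hom C R' Q2" "a2 \<cdot> u2 = k \<cdot> r1" "b2 \<cdot> u2 = r2"
    and wu: "w \<cdot> u \<in> Hom C R Q1" "a1 \<cdot> (w \<cdot> u) = (\<epsilon>2 \<cdot> u2) \<cdot> e" "b1 \<cdot> (w \<cdot> u) = d2"
    using restriction_factors[OF R' e(1-3) k u] by blast
  obtain u2' where u2': "u2' \<in> Hom C R' Q2" "a2 \<cdot> u2' = k' \<cdot> r1" "b2 \<cdot> u2' = r2"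
    and wu': "w \<cdot> u' \<in> Hom C R Q1" "a1 \<cdot> (w \<cdot> u') = (\<epsilon>2 \<cdot> u2') \<cdot> e" "b1 \<cdot> (w \<cdot> u') = d2"
    using restriction_factors[OF R' e(1-3) k' u'] by blast
  have "fhtpy C fib weq d (\<epsilon>1 \<cdot> (w \<cdot> u)) (\<epsilon>1 \<cdot> (w \<cdot> u'))"
    using htpy comp_assoc[OF u(1) w(1) arrows(12)] comp_assoc[OF u'(1) w(1) arrows(12)] by simp
  moreover have "\<pi>1 \<cdot> (\<epsilon>2 \<cdot> u2) = r2" "\<pi>1 \<cdot> (\<epsilon>2 \<cdot> u2') = r2"
    using comp_assoc[OF u2(1) arrows(14,4)] comp_assoc[OF u2'(1) arrows(14,4)] arrows(15) u2(3) u2'(3)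
    by simp_all
  ultimately have "fhtpy C fib weq \<pi>1 (\<epsilon>2 \<cdot> u2) (\<epsilon>2 \<cdot> u2')"
    using is_pi_strongD[OF inner \<open>strong\<close> r R_split Hom_comp[OF u2(1) arrows(14)] _ wu
      Hom_comp[OF u2'(1) arrows(14)] _ wu'] by blast
  then show ?thesis
    using is_pi_strongD[OF outer \<open>strong\<close> h R' k(1,2) u2 k'(1,2) u2'] HomD[OF arrows(4)] by simp
qed

lemma is_pi_composite: "is_pi C fib weq strong d (g \<cdot> f) Pi2 \<pi>2 Q (a2 \<cdot> c1) c2 (\<epsilon>1 \<cdot> w)"
proof -
  have gf: "g \<cdot> f \<in> Hom C (Dom C f) (Cod C g)" "g \<cdot> f \<in> fib"
    using Hom_comp[OF arrows(2,3)] fib_comp[OF is_piD(2)[OF inner] is_piD(2)[OF outer]] HomD[OF arrows(3)]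
    by auto
  show ?thesis unfolding is_pi_def
    using is_piD(1)[OF inner] is_piD(4)[OF outer] HomD[OF arrows(1)] HomD[OF gf(1)] gf(2) arrows(5)
      composite_pullback composite_eval composite_weak_universal composite_strong_universal
    by auto
qed

end

context path_cat
begin

lemma is_pi_comp:
  assumes inner: "is_pi C fib weq strong d f Pi1 \<pi>1 Q1 a1 b1 \<epsilon>1"
    and outer: "is_pi C fib weq strong \<pi>1 g Pi2 \<pi>2 Q2 a2 b2 \<epsilon>2"
  shows "\<exists>Q q1 q2 \<epsilon>. is_pi C fib weq strong d (g \<cdot> f) Pi2 \<pi>2 Q q1 q2 \<epsilon>"
proof -
  note i = is_piD[OF inner] and o = is_piD[OF outer]
  have b2: "b2 \<in> Hom C Q2 (Cod C f)" and \<pi>1: "\<pi>1 \<in> Hom C Pi1 (Cod C f)"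
    using pullbackD[OF o(6)] o(3) i(5) HomD[OF i(5)] by auto
  obtain Q c1 c2 where Q: "pullback C b2 f Q c1 c2"
    using pullback_exists[OF i(2), of b2] HomD[OF b2] by auto
  have c: "c1 \<in> Hom C Q Q2" "c2 \<in> Hom C Q (Dom C f)" "b2 \<cdot> c1 = f \<cdot> c2"
    using pullbackD[OF Q] HomD[OF b2] by auto
  have "\<pi>1 \<cdot> (\<epsilon>2 \<cdot> c1) = f \<cdot> c2"
    using comp_assoc[OF c(1) _ \<pi>1] o(7,8) c(3) HomD[OF \<pi>1] by auto
  then obtain w where "w \<in> Hom C Q Q1" "a1 \<cdot> w = \<epsilon>2 \<cdot> c1" "b1 \<cdot> w = c2"
    using pullback_lift[OF i(6), of "\<epsilon>2 \<cdot> c1" Q c2] Hom_comp[OF c(1)] o(7) c(2) HomD[OF \<pi>1] by auto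
  then interpret pi_composition C fib weq strong d f Pi1 \<pi>1 Q1 a1 b1 \<epsilon>1 g Pi2 \<pi>2 Q2 a2 b2 \<epsilon>2 Q c1 c2 w
    using inner outer Q by unfold_locales
  show ?thesis using is_pi_composite by blast
qed

lemma comp_closure_fib:
  assumes "display_class C fib weq strong \<D>" and "f \<in> comp_closure C \<D>"
  shows "f \<in> fib"
  using assms(2)
proof (induction rule: comp_closure.induct)
  case (base d)
  then show ?case using assms(1) unfolding display_class_def by blast
next
  case (comp f g)
  then show ?case using fib_comp by blast
qed

lemma comp_closure_pi:
  assumes \<D>: "display_class C fib weq strong \<D>" and "f \<in> comp_closure C \<D>"
  shows "d \<in> \<D> \<Longrightarrow> Cod C d = Dom C f \<Longrightarrow>
    \<exists>Pi \<pi> Q q1 q2 \<epsilon>. is_pi C fib weq strong d f Pi \<pi> Q q1 q2 \<epsilon> \<and> \<pi> \<in> \<D>"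
  using assms(2)
proof (induction arbitrary: d rule: comp_closure.induct)
  case (base e)
  then show ?case using \<D> unfolding display_class_def by blast
next
  case (comp f g)
  have "Dom C (g \<cdot> f) = Dom C f"
    using Dom_comp fib_Ar comp_closure_fib[OF \<D>] comp.hyps by blast
  then obtain Pi1 \<pi>1 Q1 a1 b1 \<epsilon>1 where inner: "is_pi C fib weq strong d f Pi1 \<pi>1 Q1 a1 b1 \<epsilon>1"
    and "\<pi>1 \<in> \<D>"
    using comp.IH(1)[OF comp.prems(1)] comp.prems(2) by auto
  moreover have "Cod C \<pi>1 = Dom C g" using HomD[OF is_piD(5)[OF inner]] comp.hyps(3) by simp
  ultimately obtain Pi2 \<pi>2 Q2 a2 b2 \<epsilon>2 where "is_pi C fib weq strong \<pi>1 g Pi2 \<pi>2 Q2 a2 b2 \<epsilon>2"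
    and "\<pi>2 \<in> \<D>"
    using comp.IH(2) by blast
  then show ?case using is_pi_comp[OF inner] by blast
qed

end

theorem lemma6p4:
  fixes C :: "('o,'m) cat" and fib weq \<D> :: "'m set" and strong :: bool
  assumes "path_category C fib weq"
    and "display_class C fib weq strong \<D>"
    and "d \<in> \<D>" and "f \<in> comp_closure C \<D>" and "Cod C d = Dom C f"
  shows "has_pi C fib weq strong d f"
proof -
  interpret path_cat C fib weq by (rule path_cat.intro) fact
  show ?thesis
    using comp_closure_pi[OF assms(2,4,3,5)] unfolding has_pi_def by blast
qed

end
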